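(* Let $\gamma\in(-1/3,0)$ be a constant and $p=n^{\gamma}$. There exists an integer function $k=k(n,\gamma)$ such that, with high probability, $G=G_{n,p}$ satisfies all of the following: (i) $G$ has an independent set of size $k-1$; (ii) $G$ has no special subgraph of order $k$ that contains at least one edge; (iii) $G$ has no special subgraph of order $k+1$.
   Context: "With high probability" means with probability tending to $1$ as $n\to\infty$. A non-star biclique is a complete bipartite graph $K_{a,b}$ with $a,b\ge2$. An induced subgraph $H$ of $G$ is a special subgraph of order $k$ if for some integer $r\ge 0$, $H$ has exactly $k+r$ vertices and the edge set of $H$ can be partitioned into at most $r$ pairwise edge-disjoint non-star bicliques. *)

theory Defs
  imports Complex_Main
begin

text \<open>Simple graphs on vertex set {..<n}; a graph is given by its edge set,
a set of 2-element subsets of {..<n}.\<close>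

definition all_edges :: "nat \<Rightarrow> nat set set" where
  "all_edges n = {e. \<exists>i j. i < j \<and> j < n \<and> e = {i, j}}"

definition gnp_prob :: "nat \<Rightarrow> real \<Rightarrow> (nat set set \<Rightarrow> bool) \<Rightarrow> real" where
  "gnp_prob n p P =
     (\<Sum>E\<in>Pow (all_edges n). if P E
        then p ^ card E * (1 - p) ^ (card (all_edges n) - card E) else 0)"

definition induced_edges :: "nat set set \<Rightarrow> nat set \<Rightarrow> nat set set" where
  "induced_edges E S = {e \<in> E. e \<subseteq> S}"

definition independent_set :: "nat \<Rightarrow> nat set set \<Rightarrow> nat set \<Rightarrow> bool" where
  "independent_set n E S \<longleftrightarrow> S \<subseteq> {..<n} \<and> induced_edges E S = {}"

definition biclique_edges :: "nat set \<Rightarrow> nat set \<Rightarrow> nat set set" where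
  "biclique_edges A B = {{x, y} | x y. x \<in> A \<and> y \<in> B}"

definition nonstar_biclique :: "nat set \<Rightarrow> nat set \<Rightarrow> bool" where
  "nonstar_biclique A B \<longleftrightarrow> finite A \<and> finite B \<and> A \<inter> B = {} \<and> card A \<ge> 2 \<and> card B \<ge> 2"

definition biclique_partitionable :: "nat set set \<Rightarrow> nat \<Rightarrow> bool" where
  "biclique_partitionable F r \<longleftrightarrow>
     (\<exists>bs :: (nat set \<times> nat set) list.
        length bs \<le> r \<and>
        (\<forall>i < length bs. nonstar_biclique (fst (bs ! i)) (snd (bs ! i))) \<and>
        (\<forall>i < length bs. \<forall>j < length bs. i \<noteq> j \<longrightarrow>
            biclique_edges (fst (bs ! i)) (snd (bs ! i)) \<inter>
            biclique_edges (fst (bs ! j)) (snd (bs ! j)) = {}) \<and>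
        (\<Union>i < length bs. biclique_edges (fst (bs ! i)) (snd (bs ! i))) = F)"

definition special_subgraph :: "nat \<Rightarrow> nat set set \<Rightarrow> nat set \<Rightarrow> int \<Rightarrow> bool" where
  "special_subgraph n E S k \<longleftrightarrow> S \<subseteq> {..<n} \<and>
     (\<exists>r :: nat. int (card S) = k + int r \<and> biclique_partitionable (induced_edges E S) r)"

end

theory Submission
  imports Defs "HOL-Real_Asymp.Real_Asymp" "HOL-Library.FuncSet"
begin

text \<open>Let f(s) = (n choose s) (1 - p)^(s choose 2) be the expected number of independent
s-sets and let k be least with f(k + 1) \<le> n^(-\<kappa>). Then f(k - 1) is polynomially large,
and the second moment method, with the overlap sum split by the size i of the intersection of
two (k - 1)-sets into the ranges i \<le> \<eta> s, \<eta> s < i \<le> \<theta> s and i > \<theta> s, yields an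
independent set of size k - 1. A special subgraph as in (ii) or (iii) is an induced subgraph on
m \<ge> k + 1 vertices whose edges are covered by at most m - k non-star bicliques. Since a K_{a,b}
with a, b \<ge> 2 has ab \<ge> (3a + 3b - 4)/2 edges, each biclique costs at most a factor
(1 + v^3)^(2m) / v^4 with v^2 = p/(1 - p), and a first moment bound over m \<ge> k + 1 decays
geometrically from f(k + 1).\<close>

lemma finite_all_edges: "finite (all_edges n)"
proof -
  have "all_edges n \<subseteq> Pow {..<n}" unfolding all_edges_def by auto
  thus ?thesis by (rule finite_subset) auto
qed

definition gnp_weight :: "nat \<Rightarrow> real \<Rightarrow> nat set set \<Rightarrow> real" where
  "gnp_weight n p E = p ^ card E * (1 - p) ^ (card (all_edges n) - card E)"

lemma gnp_prob_eq_sum_weight: "gnp_prob n p P = (\<Sum>E\<in>{E\<in>Pow (all_edges n). P E}. gnp_weight n p E)"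
  unfolding gnp_prob_def gnp_weight_def
  by (subst sum.inter_filter[symmetric]) (auto simp: finite_all_edges)

lemma sum_Pow_binomial_weights:
  fixes p :: real assumes "finite B"
  shows "(\<Sum>G\<in>Pow B. p ^ card G * (1 - p) ^ (card B - card G)) = 1"
proof -
  have "(\<Prod>x\<in>B. p + (1 - p)) = (\<Sum>X\<in>Pow B. (\<Prod>x\<in>X. p) * (\<Prod>x\<in>B-X. (1-p)))"
    by (rule prod_add[OF assms])
  also have "\<dots> = (\<Sum>G\<in>Pow B. p ^ card G * (1 - p) ^ (card B - card G))"
    by (intro sum.cong refl) (auto simp: card_Diff_subset finite_subset[OF _ assms])
  finally show ?thesis by simp
qed

lemma gnp_prob_edge_pattern:
  assumes D: "D \<subseteq> all_edges n" and F: "F \<subseteq> D"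
  shows "gnp_prob n p (\<lambda>E. E \<inter> D = F) = p ^ card F * (1 - p) ^ (card D - card F)"
proof -
  let ?A = "all_edges n"
  have fA: "finite ?A" by (rule finite_all_edges)
  have fD: "finite D" using D fA finite_subset by blast
  have fF: "finite F" using F fD finite_subset by blast
  have fAD: "finite (?A - D)" using fA by auto
  have eq: "{E\<in>Pow ?A. E \<inter> D = F} = (\<lambda>G. F \<union> G) ` Pow (?A - D)"
  proof (intro equalityI subsetI)
    fix E assume "E \<in> {E\<in>Pow ?A. E \<inter> D = F}"
    hence E: "E \<subseteq> ?A" "E \<inter> D = F" by auto
    hence "E = F \<union> (E - D)" "E - D \<in> Pow (?A - D)" by auto
    thus "E \<in> (\<lambda>G. F \<union> G) ` Pow (?A - D)" by blast
  next
    fix E assume "E \<in> (\<lambda>G. F \<union> G) ` Pow (?A - D)"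
    then obtain G where "G \<subseteq> ?A - D" "E = F \<union> G" by auto
    thus "E \<in> {E\<in>Pow ?A. E \<inter> D = F}" using F D by auto
  qed
  have inj: "inj_on (\<lambda>G. F \<union> G) (Pow (?A - D))"
    unfolding inj_on_def using F by blast
  have cardA: "card ?A = card D + card (?A - D)"
    using D fA by (metis card_Diff_subset card_mono add_diff_inverse_nat fD not_less)
  have "gnp_prob n p (\<lambda>E. E \<inter> D = F) = (\<Sum>G\<in>Pow (?A - D). gnp_weight n p (F \<union> G))"
    unfolding gnp_prob_eq_sum_weight eq by (subst sum.reindex[OF inj]) auto
  also have "\<dots> = (\<Sum>G\<in>Pow (?A - D). (p ^ card F * (1 - p) ^ (card D - card F)) *
                      (p ^ card G * (1 - p) ^ (card (?A - D) - card G)))"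
  proof (intro sum.cong refl)
    fix G assume G: "G \<in> Pow (?A - D)"
    have fG: "finite G" using G fAD finite_subset by blast
    have disj: "F \<inter> G = {}" using G F by auto
    have c1: "card (F \<union> G) = card F + card G" using card_Un_disjoint[OF fF fG disj] .
    have cF: "card F \<le> card D" using card_mono[OF fD F] .
    have cG: "card G \<le> card (?A - D)" using G card_mono[OF fAD] by auto
    have c2: "card ?A - card (F \<union> G) = (card D - card F) + (card (?A - D) - card G)"
      using c1 cF cG cardA by simp
    show "gnp_weight n p (F \<union> G) = (p ^ card F * (1 - p) ^ (card D - card F)) *
                      (p ^ card G * (1 - p) ^ (card (?A - D) - card G))"
      unfolding gnp_weight_def c2 by (simp add: c1 power_add algebra_simps)
  qed
  also have "\<dots> = p ^ card F * (1 - p) ^ (card D - card F)"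
    by (simp add: sum_distrib_left[symmetric] sum_Pow_binomial_weights[OF fAD])
  finally show ?thesis .
qed

lemma gnp_prob_True: "gnp_prob n p (\<lambda>E. True) = 1"
  using gnp_prob_edge_pattern[of "{}" n "{}" p] by simp

lemma gnp_prob_mono:
  assumes "0 \<le> p" "p \<le> 1" "\<And>E. E \<subseteq> all_edges n \<Longrightarrow> P E \<Longrightarrow> Q E"
  shows "gnp_prob n p P \<le> gnp_prob n p Q"
  unfolding gnp_prob_def using assms
  by (intro sum_mono) (auto intro!: mult_nonneg_nonneg)

lemma gnp_prob_disj:
  "gnp_prob n p (\<lambda>E. P E \<or> Q E) \<le> gnp_prob n p P + gnp_prob n p Q" if "0 \<le> p" "p \<le> 1"
  unfolding gnp_prob_def sum.distrib[symmetric] using that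
  by (intro sum_mono) (auto intro!: mult_nonneg_nonneg)

lemma gnp_prob_compl: "gnp_prob n p (\<lambda>E. \<not> P E) = 1 - gnp_prob n p P"
proof -
  have "gnp_prob n p (\<lambda>E. \<not> P E) + gnp_prob n p P = gnp_prob n p (\<lambda>E. True)"
    unfolding gnp_prob_def sum.distrib[symmetric] by (intro sum.cong) auto
  thus ?thesis using gnp_prob_True[of n p] by simp
qed

lemma gnp_prob_le_1: "0 \<le> p \<Longrightarrow> p \<le> 1 \<Longrightarrow> gnp_prob n p P \<le> 1"
  using gnp_prob_mono[of p n P "\<lambda>_. True"] gnp_prob_True by simp

definition potential_edges :: "nat \<Rightarrow> nat set \<Rightarrow> nat set set" where
  "potential_edges n S = {e\<in>all_edges n. e \<subseteq> S}"

lemma potential_edges_eq: assumes "S \<subseteq> {..<n}" shows "potential_edges n S = {T. T \<subseteq> S \<and> card T = 2}"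
proof (intro equalityI subsetI)
  fix e assume "e \<in> potential_edges n S"
  then obtain i j where "i < j" "j < n" "e = {i,j}" "e \<subseteq> S" unfolding potential_edges_def all_edges_def by auto
  thus "e \<in> {T. T \<subseteq> S \<and> card T = 2}" by auto
next
  fix T assume "T \<in> {T. T \<subseteq> S \<and> card T = 2}"
  then obtain a b where ab: "a \<noteq> b" "T = {a,b}" "T \<subseteq> S" by (auto simp: card_2_iff)
  hence "a < n" "b < n" using assms by (auto simp: subset_iff)
  have "T \<in> all_edges n"
  proof (cases "a < b")
    case True thus ?thesis using ab \<open>b < n\<close> unfolding all_edges_def by blast
  next
    case False hence "b < a" using ab by auto
    thus ?thesis using ab \<open>a < n\<close> unfolding all_edges_def by (auto simp: insert_commute)
  qed
  thus "T \<in> potential_edges n S" unfolding potential_edges_def using ab by auto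
qed

lemma card_potential_edges: assumes "S \<subseteq> {..<n}" shows "card (potential_edges n S) = card S choose 2"
  using potential_edges_eq[OF assms] n_subsets[of S 2] finite_subset[OF assms] by auto

lemma potential_edges_subset: "potential_edges n S \<subseteq> all_edges n" unfolding potential_edges_def by auto
lemma potential_edges_Int: "potential_edges n S \<inter> potential_edges n T = potential_edges n (S \<inter> T)" unfolding potential_edges_def by auto
lemma finite_potential_edges: "finite (potential_edges n S)" using potential_edges_subset finite_all_edges finite_subset by blast

lemma induced_edges_eq_Int: "E \<subseteq> all_edges n \<Longrightarrow> induced_edges E S = E \<inter> potential_edges n S"
  unfolding induced_edges_def potential_edges_def by auto

lemma gnp_prob_cong: "(\<And>E. E \<subseteq> all_edges n \<Longrightarrow> P E = Q E) \<Longrightarrow> gnp_prob n p P = gnp_prob n p Q"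
  unfolding gnp_prob_def by (intro sum.cong) auto

lemma gnp_prob_independent: assumes "S \<subseteq> {..<n}"
  shows "gnp_prob n p (\<lambda>E. E \<inter> potential_edges n S = {}) = (1 - p) ^ (card S choose 2)"
  using gnp_prob_edge_pattern[OF potential_edges_subset, of "{}" n S p] card_potential_edges[OF assms] by simp

lemma gnp_prob_eq_sum_indicator: "gnp_prob n p P = (\<Sum>E\<in>Pow (all_edges n). gnp_weight n p E * (if P E then 1 else 0))"
  unfolding gnp_prob_def gnp_weight_def by (intro sum.cong) auto

lemma gnp_prob_none_independent_second_moment:
  fixes K :: "nat set set" and p :: real
  assumes p: "0 \<le> p" "p < 1" and fK: "finite K" and K0: "K \<noteq> {}"
    and Ksub: "\<And>S. S \<in> K \<Longrightarrow> S \<subseteq> {..<n} \<and> card S = s"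
  shows "gnp_prob n p (\<lambda>E. \<forall>S\<in>K. E \<inter> potential_edges n S \<noteq> {}) \<le>
     (\<Sum>S\<in>K. \<Sum>T\<in>K. (1 - p) ^ card (potential_edges n S \<union> potential_edges n T)) / (card K * (1 - p) ^ (s choose 2))\<^sup>2 - 1"
proof -
  let ?A = "Pow (all_edges n)"
  define w where "w = gnp_weight n p"
  define I where "I = (\<lambda>E S. if E \<inter> potential_edges n S = {} then (1::real) else 0)"
  define X where "X = (\<lambda>E. \<Sum>S\<in>K. I E S)"
  define \<mu> where "\<mu> = card K * (1 - p) ^ (s choose 2)"
  define Q where "Q = (\<Sum>S\<in>K. \<Sum>T\<in>K. (1 - p) ^ card (potential_edges n S \<union> potential_edges n T))"
  have w0: "w E \<ge> 0" for E using p unfolding w_def gnp_weight_def by auto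
  have mu0: "\<mu> > 0" unfolding \<mu>_def using p fK K0 by (auto simp: card_gt_0_iff)
  have sumw: "(\<Sum>E\<in>?A. w E) = 1" using gnp_prob_eq_sum_indicator[of n p "\<lambda>_. True"] gnp_prob_True
    unfolding w_def by simp
  have sumX: "(\<Sum>E\<in>?A. w E * X E) = \<mu>"
  proof -
    have "(\<Sum>E\<in>?A. w E * X E) = (\<Sum>S\<in>K. \<Sum>E\<in>?A. w E * I E S)"
      unfolding X_def sum_distrib_left by (rule sum.swap)
    also have "\<dots> = (\<Sum>S\<in>K. (1 - p) ^ (s choose 2))"
    proof (intro sum.cong refl)
      fix S assume S: "S \<in> K"
      have "(\<Sum>E\<in>?A. w E * I E S) = gnp_prob n p (\<lambda>E. E \<inter> potential_edges n S = {})"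
        unfolding gnp_prob_eq_sum_indicator w_def I_def by simp
      also have "\<dots> = (1 - p) ^ (s choose 2)" using gnp_prob_independent[of S n p] Ksub[OF S] by simp
      finally show "(\<Sum>E\<in>?A. w E * I E S) = (1 - p) ^ (s choose 2)" .
    qed
    finally show ?thesis unfolding \<mu>_def by simp
  qed
  have sumX2: "(\<Sum>E\<in>?A. w E * (X E)\<^sup>2) = Q"
  proof -
    have "(\<Sum>E\<in>?A. w E * (X E)\<^sup>2) = (\<Sum>E\<in>?A. \<Sum>S\<in>K. \<Sum>T\<in>K. w E * (I E S * I E T))"
      unfolding X_def power2_eq_square sum_product by (simp add: sum_distrib_left)
    also have "\<dots> = (\<Sum>S\<in>K. \<Sum>T\<in>K. \<Sum>E\<in>?A. w E * (I E S * I E T))"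
      by (subst sum.swap) (simp add: sum.swap[of _ ?A])
    also have "\<dots> = Q" unfolding Q_def
    proof (intro sum.cong refl)
      fix S T assume S: "S \<in> K" and T: "T \<in> K"
      have "(\<Sum>E\<in>?A. w E * (I E S * I E T)) = gnp_prob n p (\<lambda>E. E \<inter> (potential_edges n S \<union> potential_edges n T) = {})"
        unfolding gnp_prob_eq_sum_indicator w_def I_def by (intro sum.cong) auto
      also have "\<dots> = (1 - p) ^ card (potential_edges n S \<union> potential_edges n T)"
        using gnp_prob_edge_pattern[of "potential_edges n S \<union> potential_edges n T" n "{}" p] potential_edges_subset by simp
      finally show "(\<Sum>E\<in>?A. w E * (I E S * I E T)) = (1 - p) ^ card (potential_edges n S \<union> potential_edges n T)" .
    qed
    finally show ?thesis .
  qed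
  have "gnp_prob n p (\<lambda>E. \<forall>S\<in>K. E \<inter> potential_edges n S \<noteq> {}) = (\<Sum>E\<in>?A. w E * (if X E = 0 then 1 else 0))"
    unfolding gnp_prob_eq_sum_indicator w_def
  proof (intro sum.cong refl)
    fix E
    have "X E = 0 \<longleftrightarrow> (\<forall>S\<in>K. I E S = 0)" unfolding X_def
      using fK by (subst sum_nonneg_eq_0_iff) (auto simp: I_def)
    also have "\<dots> \<longleftrightarrow> (\<forall>S\<in>K. E \<inter> potential_edges n S \<noteq> {})" by (auto simp: I_def)
    finally show "gnp_weight n p E * (if \<forall>S\<in>K. E \<inter> potential_edges n S \<noteq> {} then 1 else 0) =
         gnp_weight n p E * (if X E = 0 then 1 else 0)" by simp
  qed
  also have "\<dots> \<le> (\<Sum>E\<in>?A. w E * ((X E - \<mu>)\<^sup>2 / \<mu>\<^sup>2))"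
  proof (intro sum_mono mult_left_mono w0)
    fix E
    have X0: "X E \<ge> 0" unfolding X_def I_def by (auto intro: sum_nonneg)
    show "(if X E = 0 then 1 else 0) \<le> (X E - \<mu>)\<^sup>2 / \<mu>\<^sup>2" using mu0 by auto
  qed
  also have "\<dots> = ((\<Sum>E\<in>?A. w E * (X E)\<^sup>2) - 2 * \<mu> * (\<Sum>E\<in>?A. w E * X E) + \<mu>\<^sup>2 * (\<Sum>E\<in>?A. w E)) / \<mu>\<^sup>2"
    by (simp add: sum_divide_distrib sum_distrib_left sum_subtractf sum.distrib power2_diff
        algebra_simps diff_divide_distrib add_divide_distrib)
  also have "\<dots> = Q / \<mu>\<^sup>2 - 1" unfolding sumX sumX2 sumw using mu0
    by (simp add: field_simps power2_eq_square)
  finally show ?thesis unfolding Q_def \<mu>_def .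
qed

definition subsets_of_card :: "nat \<Rightarrow> nat \<Rightarrow> nat set set" where
  "subsets_of_card n s = {S. S \<subseteq> {..<n} \<and> card S = s}"

lemma card_subsets_of_card: "card (subsets_of_card n s) = n choose s"
  unfolding subsets_of_card_def using n_subsets[of "{..<n}" s] by simp

lemma finite_subsets_of_card: "finite (subsets_of_card n s)"
  unfolding subsets_of_card_def by (rule finite_subset[of _ "Pow {..<n}"]) auto

definition indep_expectation :: "nat \<Rightarrow> real \<Rightarrow> nat \<Rightarrow> real" where
  "indep_expectation n p s = real (n choose s) * (1 - p) ^ (s choose 2)"

lemma card_subsets_with_overlap:
  assumes S: "S \<subseteq> {..<n}" "card S = s"
  shows "card {T\<in>subsets_of_card n s. card (S \<inter> T) = i} \<le> (s choose i) * ((n - s) choose (s - i))"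
proof -
  let ?P = "{A. A \<subseteq> S \<and> card A = i} \<times> {B. B \<subseteq> {..<n} - S \<and> card B = s - i}"
  have fS: "finite S" using S finite_subset by blast
  have inj: "inj_on (\<lambda>T. (S \<inter> T, T - S)) {T\<in>subsets_of_card n s. card (S \<inter> T) = i}"
    unfolding inj_on_def subsets_of_card_def by auto
  have img: "(\<lambda>T. (S \<inter> T, T - S)) ` {T\<in>subsets_of_card n s. card (S \<inter> T) = i} \<subseteq> ?P"
  proof
    fix x assume "x \<in> (\<lambda>T. (S \<inter> T, T - S)) ` {T\<in>subsets_of_card n s. card (S \<inter> T) = i}"
    then obtain T where T: "T \<subseteq> {..<n}" "card T = s" "card (S \<inter> T) = i" "x = (S \<inter> T, T - S)"
      unfolding subsets_of_card_def by auto
    have fT: "finite T" using T finite_subset by blast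
    have "card (T - S) = card T - card (T \<inter> S)" using fT by (simp add: card_Diff_subset_Int)
    hence "card (T - S) = s - i" using T by (simp add: Int_commute)
    thus "x \<in> ?P" using T by auto
  qed
  have fP: "finite ?P" using fS by (auto intro!: finite_cartesian_product)
  have "card {T\<in>subsets_of_card n s. card (S \<inter> T) = i} \<le> card ?P"
    using card_inj_on_le[OF inj img fP] .
  also have "card ?P = (s choose i) * ((n - s) choose (s - i))"
  proof -
    have "card ({..<n} - S) = n - s" using S fS by (simp add: card_Diff_subset)
    thus ?thesis using n_subsets[OF fS, of i] n_subsets[of "{..<n} - S" "s - i"] S
      by (simp add: card_cartesian_product)
  qed
  finally show ?thesis .
qed

lemma card_potential_edges_Un:
  assumes "S \<subseteq> {..<n}" "T \<subseteq> {..<n}" "card S = s" "card T = s"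
  shows "card (potential_edges n S \<union> potential_edges n T) + (card (S \<inter> T) choose 2) = 2 * (s choose 2)"
proof -
  have "card (potential_edges n S) + card (potential_edges n T) = card (potential_edges n S \<union> potential_edges n T) + card (potential_edges n S \<inter> potential_edges n T)"
    by (rule card_Un_Int) (auto simp: finite_potential_edges)
  moreover have "S \<inter> T \<subseteq> {..<n}" using assms by auto
  ultimately show ?thesis using card_potential_edges[of S n] card_potential_edges[of T n] card_potential_edges[of "S \<inter> T" n] assms potential_edges_Int
    by auto
qed

definition overlap_weight :: "real \<Rightarrow> nat \<Rightarrow> real" where
  "overlap_weight p i = 1 / (1 - p) ^ (i choose 2)"

text \<open>The contribution of pairs of s-sets meeting in i vertices to the normalised second
moment of the number of independent s-sets.\<close>

definition overlap_term :: "nat \<Rightarrow> real \<Rightarrow> nat \<Rightarrow> nat \<Rightarrow> real" where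
  "overlap_term n p s i =
     real (s choose i) * real ((n - s) choose (s - i)) / real (n choose s) * overlap_weight p i"

lemma overlap_weight_ge_1: "0 \<le> p \<Longrightarrow> p < 1 \<Longrightarrow> 1 \<le> overlap_weight p i"
  unfolding overlap_weight_def by (simp add: power_le_one)

lemma sum_overlap_weight_le:
  fixes p :: real
  assumes p: "0 \<le> p" "p < 1" and S: "S \<in> subsets_of_card n s"
  shows "(\<Sum>T\<in>subsets_of_card n s. (overlap_weight p (card (S \<inter> T)) - 1)) \<le>
      (\<Sum>i\<in>{2..s}. real (s choose i) * real ((n - s) choose (s - i)) * overlap_weight p i)"
proof -
  have Sn: "S \<subseteq> {..<n}" "card S = s" using S unfolding subsets_of_card_def by auto
  have "(\<Sum>T\<in>subsets_of_card n s. (overlap_weight p (card (S \<inter> T)) - 1)) =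
        (\<Sum>i\<in>{..s}. \<Sum>T\<in>{T\<in>subsets_of_card n s. card (S \<inter> T) = i}. (overlap_weight p (card (S \<inter> T)) - 1))"
  proof (rule sum.group[symmetric])
    show "finite (subsets_of_card n s)" by (rule finite_subsets_of_card)
    show "(\<lambda>T. card (S \<inter> T)) ` subsets_of_card n s \<subseteq> {..s}"
      using Sn by (auto intro!: card_mono finite_subset[of _ "{..<n}"] simp flip: Sn(2))
  qed simp
  also have "\<dots> = (\<Sum>i\<in>{..s}. real (card {T\<in>subsets_of_card n s. card (S \<inter> T) = i}) * (overlap_weight p i - 1))"
    by (intro sum.cong refl) simp
  also have "\<dots> \<le> (\<Sum>i\<in>{..s}. (if 2 \<le> i then real (s choose i) * real ((n - s) choose (s - i)) * overlap_weight p i else 0))"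
  proof (intro sum_mono)
    fix i assume "i \<in> {..s}"
    show "real (card {T\<in>subsets_of_card n s. card (S \<inter> T) = i}) * (overlap_weight p i - 1) \<le>
       (if 2 \<le> i then real (s choose i) * real ((n - s) choose (s - i)) * overlap_weight p i else 0)"
    proof (cases "2 \<le> i")
      case True
      have "real (card {T\<in>subsets_of_card n s. card (S \<inter> T) = i}) * (overlap_weight p i - 1) \<le>
            real ((s choose i) * ((n - s) choose (s - i))) * (overlap_weight p i - 1)"
        using card_subsets_with_overlap[OF Sn, of i] overlap_weight_ge_1[OF p, of i] by (intro mult_right_mono) (auto simp flip: of_nat_mult)
      also have "\<dots> \<le> real (s choose i) * real ((n - s) choose (s - i)) * overlap_weight p i"
        unfolding of_nat_mult by (intro mult_left_mono) auto
      finally show ?thesis using True by simp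
    next
      case False hence c: "i choose 2 = 0" by simp
      have "overlap_weight p i = 1" unfolding overlap_weight_def c by simp
      thus ?thesis using False by simp
    qed
  qed
  also have "\<dots> = (\<Sum>i\<in>{2..s}. real (s choose i) * real ((n - s) choose (s - i)) * overlap_weight p i)"
    by (subst sum.inter_filter[symmetric]) (auto intro!: sum.cong)
  finally show ?thesis .
qed

lemma gnp_prob_no_independent_set_le:
  fixes p :: real
  assumes p: "0 \<le> p" "p < 1" and sn: "s \<le> n"
  shows "gnp_prob n p (\<lambda>E. \<forall>S\<in>subsets_of_card n s. E \<inter> potential_edges n S \<noteq> {}) \<le>
     (\<Sum>i\<in>{2..s}. overlap_term n p s i)"
proof -
  let ?K = "subsets_of_card n s"
  let ?c = "(1 - p) ^ (s choose 2)"
  have K0: "?K \<noteq> {}" using card_subsets_of_card[of n s] sn by (metis card.empty zero_less_binomial_iff less_numeral_extra(3))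
  have cK: "card ?K = n choose s" by (rule card_subsets_of_card)
  have c0: "?c > 0" using p by auto
  have Kpos: "real (n choose s) > 0" using sn by simp
  have key: "(1 - p) ^ card (potential_edges n S \<union> potential_edges n T) = ?c\<^sup>2 * overlap_weight p (card (S \<inter> T))"
    if "S \<in> ?K" "T \<in> ?K" for S T
  proof -
    have e: "card (potential_edges n S \<union> potential_edges n T) + (card (S \<inter> T) choose 2) = 2 * (s choose 2)"
      using card_potential_edges_Un[of S n T s] that unfolding subsets_of_card_def by auto
    have "(1 - p) ^ card (potential_edges n S \<union> potential_edges n T) * (1 - p) ^ (card (S \<inter> T) choose 2) = ?c\<^sup>2"
      using e by (metis power_add power_mult mult.commute power2_eq_square)
    thus ?thesis unfolding overlap_weight_def using p by (simp add: field_simps)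
  qed
  have "gnp_prob n p (\<lambda>E. \<forall>S\<in>?K. E \<inter> potential_edges n S \<noteq> {}) \<le>
     (\<Sum>S\<in>?K. \<Sum>T\<in>?K. (1 - p) ^ card (potential_edges n S \<union> potential_edges n T)) / (card ?K * ?c)\<^sup>2 - 1"
    by (rule gnp_prob_none_independent_second_moment[OF p finite_subsets_of_card K0]) (auto simp: subsets_of_card_def)
  also have "(\<Sum>S\<in>?K. \<Sum>T\<in>?K. (1 - p) ^ card (potential_edges n S \<union> potential_edges n T)) =
      ?c\<^sup>2 * (\<Sum>S\<in>?K. \<Sum>T\<in>?K. overlap_weight p (card (S \<inter> T)))"
    by (simp add: key sum_distrib_left)
  also have "?c\<^sup>2 * (\<Sum>S\<in>?K. \<Sum>T\<in>?K. overlap_weight p (card (S \<inter> T))) / (card ?K * ?c)\<^sup>2 - 1 =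
      (\<Sum>S\<in>?K. \<Sum>T\<in>?K. (overlap_weight p (card (S \<inter> T)) - 1)) / (card ?K)\<^sup>2"
    using c0 K0 finite_subsets_of_card[of n s] p by (simp add: sum_subtractf field_simps power2_eq_square card_gt_0_iff)
  also have "\<dots> \<le> (\<Sum>S\<in>?K. (\<Sum>i\<in>{2..s}. real (s choose i) * real ((n - s) choose (s - i)) * overlap_weight p i)) / (card ?K)\<^sup>2"
    by (intro divide_right_mono sum_mono sum_overlap_weight_le[OF p]) auto
  also have "\<dots> = (\<Sum>i\<in>{2..s}. real (s choose i) * real ((n - s) choose (s - i)) * overlap_weight p i) / real (n choose s)"
    unfolding cK using Kpos by (simp add: power2_eq_square cK)
  also have "\<dots> = (\<Sum>i\<in>{2..s}. overlap_term n p s i)"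
    by (simp add: sum_divide_distrib overlap_term_def)
  finally show ?thesis .
qed

lemma gnp_prob_Bex_le:
  assumes "finite X" "0 \<le> p" "p \<le> 1"
  shows "gnp_prob n p (\<lambda>E. \<exists>x\<in>X. Q x E) \<le> (\<Sum>x\<in>X. gnp_prob n p (Q x))"
  using assms(1)
proof (induction X rule: finite_induct)
  case empty thus ?case using gnp_prob_compl[of n p "\<lambda>_. True"] gnp_prob_True by simp
next
  case (insert x X)
  have "gnp_prob n p (\<lambda>E. \<exists>y\<in>insert x X. Q y E) = gnp_prob n p (\<lambda>E. Q x E \<or> (\<exists>y\<in>X. Q y E))"
    by (intro gnp_prob_cong) auto
  also have "\<dots> \<le> gnp_prob n p (Q x) + gnp_prob n p (\<lambda>E. \<exists>y\<in>X. Q y E)"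
    by (rule gnp_prob_disj[OF assms(2,3)])
  also have "\<dots> \<le> gnp_prob n p (Q x) + (\<Sum>y\<in>X. gnp_prob n p (Q y))" using insert by simp
  finally show ?case using insert by simp
qed

lemma card_biclique_edges:
  assumes "finite A" "finite B" "A \<inter> B = {}"
  shows "card (biclique_edges A B) = card A * card B"
proof -
  have eq: "biclique_edges A B = (\<lambda>(x,y). {x,y}) ` (A \<times> B)"
    unfolding biclique_edges_def by auto
  have "inj_on (\<lambda>(x,y). {x,y}) (A \<times> B)"
    unfolding inj_on_def using assms(3) by (auto simp: doubleton_eq_iff)
  thus ?thesis unfolding eq using assms by (simp add: card_image card_cartesian_product)
qed

lemma finite_biclique_edges: "finite A \<Longrightarrow> finite B \<Longrightarrow> finite (biclique_edges A B)"
  unfolding biclique_edges_def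
  by (rule finite_subset[of _ "(\<lambda>(x,y). {x,y}) ` (A \<times> B)"]) auto

lemma doubleton_in_all_edges: assumes "x \<noteq> y" "x < n" "y < n" shows "{x,y} \<in> all_edges n"
proof (cases "x < y")
  case True thus ?thesis using assms unfolding all_edges_def by blast
next
  case False hence "y < x" using assms by auto
  thus ?thesis using assms unfolding all_edges_def by (auto simp: insert_commute)
qed

definition nonstar_pairs :: "nat set \<Rightarrow> (nat set \<times> nat set) set" where
  "nonstar_pairs S = {(A,B). A \<subseteq> S \<and> B \<subseteq> S \<and> nonstar_biclique A B}"

lemma finite_nonstar_pairs: "finite S \<Longrightarrow> finite (nonstar_pairs S)"
  unfolding nonstar_pairs_def by (rule finite_subset[of _ "Pow S \<times> Pow S"]) auto

text \<open>A partition into j \<le> r bicliques is encoded as a function on {..<j}, so that the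
first moment bound factorises into the j-th power of a sum over single bicliques.\<close>

definition biclique_union :: "nat \<Rightarrow> (nat \<Rightarrow> nat set \<times> nat set) \<Rightarrow> nat set set" where
  "biclique_union j g = (\<Union>i<j. biclique_edges (fst (g i)) (snd (g i)))"

definition edge_disjoint_family :: "nat \<Rightarrow> (nat \<Rightarrow> nat set \<times> nat set) \<Rightarrow> bool" where
  "edge_disjoint_family j g \<longleftrightarrow> (\<forall>i<j. \<forall>i'<j. i \<noteq> i' \<longrightarrow>
      biclique_edges (fst (g i)) (snd (g i)) \<inter> biclique_edges (fst (g i')) (snd (g i')) = {})"

lemma biclique_partition_witness:
  assumes E: "E \<subseteq> all_edges n" and S: "S \<subseteq> {..<n}"
    and bp: "biclique_partitionable (induced_edges E S) r"
  shows "\<exists>jg\<in>Sigma {..r} (\<lambda>j. PiE {..<j} (\<lambda>_. nonstar_pairs S)).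
           edge_disjoint_family (fst jg) (snd jg) \<and> E \<inter> potential_edges n S = biclique_union (fst jg) (snd jg)"
proof -
  obtain bs where bs: "length bs \<le> r"
    "\<forall>i<length bs. nonstar_biclique (fst (bs ! i)) (snd (bs ! i))"
    "\<forall>i<length bs. \<forall>j<length bs. i \<noteq> j \<longrightarrow>
        biclique_edges (fst (bs ! i)) (snd (bs ! i)) \<inter> biclique_edges (fst (bs ! j)) (snd (bs ! j)) = {}"
    "(\<Union>i<length bs. biclique_edges (fst (bs ! i)) (snd (bs ! i))) = induced_edges E S"
    using bp unfolding biclique_partitionable_def by blast
  define j where "j = length bs"
  define g where "g = restrict (\<lambda>i. bs ! i) {..<j}"
  have U: "biclique_union j g = E \<inter> potential_edges n S"
    unfolding biclique_union_def g_def j_def using bs(4) induced_edges_eq_Int[OF E] by simp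
  have "g i \<in> nonstar_pairs S" if i: "i < j" for i
  proof -
    obtain A B where AB: "bs ! i = (A,B)" by fastforce
    have ns: "nonstar_biclique A B" using bs(2) i AB unfolding j_def by force
    hence "A \<noteq> {}" "B \<noteq> {}" unfolding nonstar_biclique_def by auto
    have sub: "biclique_edges A B \<subseteq> potential_edges n S" using U i AB unfolding biclique_union_def g_def by force
    have "A \<subseteq> S"
    proof
      fix x assume x: "x \<in> A"
      obtain y where y: "y \<in> B" using \<open>B \<noteq> {}\<close> by auto
      have "{x,y} \<in> biclique_edges A B" unfolding biclique_edges_def using x y by auto
      thus "x \<in> S" using sub unfolding potential_edges_def by auto
    qed
    moreover have "B \<subseteq> S"
    proof
      fix y assume y: "y \<in> B"
      obtain x where x: "x \<in> A" using \<open>A \<noteq> {}\<close> by auto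
      have "{x,y} \<in> biclique_edges A B" unfolding biclique_edges_def using x y by auto
      thus "y \<in> S" using sub unfolding potential_edges_def by auto
    qed
    ultimately show ?thesis using ns AB i unfolding nonstar_pairs_def g_def by auto
  qed
  hence "g \<in> PiE {..<j} (\<lambda>_. nonstar_pairs S)" unfolding g_def by auto
  moreover have "edge_disjoint_family j g" unfolding edge_disjoint_family_def g_def j_def using bs(3) by auto
  moreover have "j \<le> r" using bs(1) j_def by simp
  ultimately have "(j,g) \<in> Sigma {..r} (\<lambda>j. PiE {..<j} (\<lambda>_. nonstar_pairs S))" by auto
  thus ?thesis using U \<open>edge_disjoint_family j g\<close> by (intro bexI[of _ "(j,g)"]) auto
qed

lemma gnp_prob_biclique_union:
  fixes p :: real
  assumes p: "0 \<le> p" "p < 1" and S: "S \<subseteq> {..<n}" "card S = m"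
    and g: "g \<in> PiE {..<j} (\<lambda>_. nonstar_pairs S)"
  shows "gnp_prob n p (\<lambda>E. edge_disjoint_family j g \<and> E \<inter> potential_edges n S = biclique_union j g) \<le>
    (1 - p) ^ (m choose 2) * (\<Prod>i<j. (p / (1 - p)) ^ (card (fst (g i)) * card (snd (g i))))"
proof (cases "edge_disjoint_family j g")
  case False
  have "gnp_prob n p (\<lambda>E. edge_disjoint_family j g \<and> E \<inter> potential_edges n S = biclique_union j g) = gnp_prob n p (\<lambda>E. \<not> True)"
    using False by (intro gnp_prob_cong) auto
  also have "\<dots> = 0" using gnp_prob_compl[of n p "\<lambda>_. True"] gnp_prob_True by simp
  finally show ?thesis using p by (auto intro!: mult_nonneg_nonneg prod_nonneg)
next
  case True
  have fS: "finite S" using S finite_subset by blast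
  have gi: "g i \<in> nonstar_pairs S" if "i < j" for i using g that by auto
  have fin: "finite (fst (g i))" "finite (snd (g i))" "fst (g i) \<inter> snd (g i) = {}" if "i < j" for i
    using gi[OF that] fS finite_subset unfolding nonstar_pairs_def nonstar_biclique_def by auto
  have sub: "biclique_union j g \<subseteq> potential_edges n S"
  proof
    fix e assume "e \<in> biclique_union j g"
    then obtain i x y where i: "i < j" "x \<in> fst (g i)" "y \<in> snd (g i)" "e = {x,y}"
      unfolding biclique_union_def biclique_edges_def by auto
    have xy: "x \<noteq> y" using fin(3)[OF i(1)] i by auto
    have "x \<in> S" "y \<in> S" using gi[OF i(1)] i unfolding nonstar_pairs_def by auto
    hence "x < n" "y < n" using S by auto
    hence "e \<in> all_edges n" using i(4) xy doubleton_in_all_edges by simp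
    thus "e \<in> potential_edges n S" unfolding potential_edges_def using i(4) \<open>x \<in> S\<close> \<open>y \<in> S\<close> by auto
  qed
  have cU: "card (biclique_union j g) = (\<Sum>i<j. card (fst (g i)) * card (snd (g i)))"
    unfolding biclique_union_def using True unfolding edge_disjoint_family_def
    by (subst card_UN_disjoint) (auto simp: finite_biclique_edges fin card_biclique_edges)
  have cD: "card (potential_edges n S) = m choose 2" using card_potential_edges[OF S(1)] S by simp
  have le: "card (biclique_union j g) \<le> m choose 2" using card_mono[OF finite_potential_edges sub] cD by simp
  have "gnp_prob n p (\<lambda>E. edge_disjoint_family j g \<and> E \<inter> potential_edges n S = biclique_union j g) = gnp_prob n p (\<lambda>E. E \<inter> potential_edges n S = biclique_union j g)"
    using True by (intro gnp_prob_cong) auto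
  also have "\<dots> = p ^ card (biclique_union j g) * (1 - p) ^ (card (potential_edges n S) - card (biclique_union j g))"
    by (rule gnp_prob_edge_pattern[OF potential_edges_subset sub])
  also have "\<dots> = (1 - p) ^ (m choose 2) * (p / (1 - p)) ^ card (biclique_union j g)"
    using p le unfolding cD by (simp add: power_diff power_divide field_simps)
  also have "(p / (1 - p)) ^ card (biclique_union j g) = (\<Prod>i<j. (p / (1 - p)) ^ (card (fst (g i)) * card (snd (g i))))"
    unfolding cU by (simp add: power_sum)
  finally show ?thesis by simp
qed

lemma sum_Pow_power_card: assumes "finite S" shows "(\<Sum>A\<in>Pow S. (x::real) ^ card A) = (1 + x) ^ card S"
proof -
  have "(\<Prod>y\<in>S. x + 1) = (\<Sum>X\<in>Pow S. (\<Prod>y\<in>X. x) * (\<Prod>y\<in>S-X. 1))"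
    by (rule prod_add[OF assms])
  thus ?thesis by (simp add: add.commute)
qed

lemma sum_nonstar_pairs_weight_le:
  fixes v :: real
  assumes v: "0 < v" "v \<le> 1" and fS: "finite S"
  shows "(\<Sum>x\<in>nonstar_pairs S. (v\<^sup>2) ^ (card (fst x) * card (snd x))) \<le> (1 + v^3) ^ (2 * card S) / v ^ 4"
proof -
  have "(\<Sum>x\<in>nonstar_pairs S. (v\<^sup>2) ^ (card (fst x) * card (snd x))) \<le>
        (\<Sum>x\<in>nonstar_pairs S. (v^3) ^ card (fst x) * (v^3) ^ card (snd x) / v ^ 4)"
  proof (intro sum_mono)
    fix x assume "x \<in> nonstar_pairs S"
    then obtain A B where x: "x = (A,B)" "card A \<ge> 2" "card B \<ge> 2"
      unfolding nonstar_pairs_def nonstar_biclique_def by auto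
    define a where "a = card A"
    define b where "b = card B"
    have ab: "a \<ge> 2" "b \<ge> 2" using x a_def b_def by auto
    have "(2*a - 3) * (2*b - 3) \<ge> 1" using ab by (simp add: Suc_le_eq)
    hence key: "3*a + 3*b \<le> 2*(a*b) + 4" using ab by (simp add: algebra_simps)
    have "(v\<^sup>2) ^ (a * b) * v ^ 4 = v ^ (2*(a*b) + 4)" by (simp add: power_mult power_add)
    also have "\<dots> \<le> v ^ (3*a + 3*b)" using key v by (intro power_decreasing) auto
    also have "\<dots> = (v^3) ^ a * (v^3) ^ b" by (simp add: power_mult power_add)
    finally have "(v\<^sup>2) ^ (a * b) \<le> (v^3) ^ a * (v^3) ^ b / v ^ 4" using v by (simp add: field_simps)
    thus "(v\<^sup>2) ^ (card (fst x) * card (snd x)) \<le> (v^3) ^ card (fst x) * (v^3) ^ card (snd x) / v ^ 4"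
      using x a_def b_def by simp
  qed
  also have "\<dots> \<le> (\<Sum>x\<in>Pow S \<times> Pow S. (v^3) ^ card (fst x) * (v^3) ^ card (snd x) / v ^ 4)"
    using fS v by (intro sum_mono2) (auto simp: nonstar_pairs_def)
  also have "\<dots> = (\<Sum>A\<in>Pow S. (v^3) ^ card A) * (\<Sum>B\<in>Pow S. (v^3) ^ card B) / v ^ 4"
    by (simp add: sum.cartesian_product case_prod_unfold sum_product sum_divide_distrib)
  also have "\<dots> = (1 + v^3) ^ (2 * card S) / v ^ 4"
    using sum_Pow_power_card[OF fS] by (simp add: power_mult power2_eq_square mult_2 power_add)
  finally show ?thesis .
qed

lemma sum_Sigma_nested:
  assumes "finite A" "\<And>a. a \<in> A \<Longrightarrow> finite (B a)"
  shows "(\<Sum>x\<in>Sigma A B. f x) = (\<Sum>a\<in>A. \<Sum>b\<in>B a. f (a,b))"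
  using assms by (subst sum.Sigma) auto

lemma gnp_prob_biclique_partitionable_le:
  fixes p v :: real
  assumes p: "0 < p" "p < 1" and v: "v = sqrt (p / (1 - p))" "v \<le> 1"
    and S: "S \<subseteq> {..<n}" "card S = m"
  shows "gnp_prob n p (\<lambda>E. biclique_partitionable (induced_edges E S) r) \<le>
     (1 - p) ^ (m choose 2) * (real r + 1) * ((1 + v^3) ^ (2 * m) / v ^ 4) ^ r"
proof -
  let ?q = "p / (1 - p)"
  let ?X = "Sigma {..r} (\<lambda>j. PiE {..<j} (\<lambda>_. nonstar_pairs S))"
  let ?G = "(\<Sum>x\<in>nonstar_pairs S. ?q ^ (card (fst x) * card (snd x)))"
  let ?B = "(1 + v^3) ^ (2 * m) / v ^ 4"
  have fS: "finite S" using S finite_subset by blast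
  have q: "?q > 0" using p by auto
  have v0: "v > 0" using v q by simp
  have vq: "v\<^sup>2 = ?q" using v q by simp
  have GB: "?G \<le> ?B" using sum_nonstar_pairs_weight_le[OF v0 v(2) fS] vq S by simp
  have G0: "?G \<ge> 0" using q by (auto intro: sum_nonneg)
  have B1: "?B \<ge> 1"
  proof -
    have "v ^ 4 \<le> 1" using v0 v by (simp add: power_le_one)
    moreover have "1 \<le> (1 + v^3) ^ (2 * m)" using v0 by simp
    ultimately have "v ^ 4 \<le> (1 + v^3) ^ (2 * m)" by linarith
    thus ?thesis using v0 by (simp add: le_divide_eq)
  qed
  have finX: "finite ?X" using finite_nonstar_pairs[OF fS]
    by (intro finite_SigmaI) (auto intro!: finite_PiE)
  have "gnp_prob n p (\<lambda>E. biclique_partitionable (induced_edges E S) r) \<le>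
        gnp_prob n p (\<lambda>E. \<exists>jg\<in>?X. edge_disjoint_family (fst jg) (snd jg) \<and> E \<inter> potential_edges n S = biclique_union (fst jg) (snd jg))"
    using p biclique_partition_witness[OF _ S(1)] by (intro gnp_prob_mono) auto
  also have "\<dots> \<le> (\<Sum>jg\<in>?X. gnp_prob n p (\<lambda>E. edge_disjoint_family (fst jg) (snd jg) \<and> E \<inter> potential_edges n S = biclique_union (fst jg) (snd jg)))"
    using p by (intro gnp_prob_Bex_le finX) auto
  also have "\<dots> \<le> (\<Sum>jg\<in>?X. (1 - p) ^ (m choose 2) * (\<Prod>i<fst jg. ?q ^ (card (fst (snd jg i)) * card (snd (snd jg i)))))"
    using p S by (intro sum_mono gnp_prob_biclique_union) auto
  also have "\<dots> = (1 - p) ^ (m choose 2) * (\<Sum>j\<le>r. \<Sum>g\<in>PiE {..<j} (\<lambda>_. nonstar_pairs S). (\<Prod>i<j. ?q ^ (card (fst (g i)) * card (snd (g i)))))"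
    by (simp add: sum_distrib_left sum_Sigma_nested finite_nonstar_pairs fS finite_PiE)
  also have "\<dots> = (1 - p) ^ (m choose 2) * (\<Sum>j\<le>r. ?G ^ j)"
    by (subst prod_sum_PiE[symmetric]) (auto simp: finite_nonstar_pairs fS)
  also have "\<dots> \<le> (1 - p) ^ (m choose 2) * (\<Sum>j\<le>r. ?B ^ r)"
  proof (intro mult_left_mono sum_mono)
    fix j assume "j \<in> {..r}"
    have "?G ^ j \<le> ?B ^ j" using G0 GB by (intro power_mono) auto
    also have "\<dots> \<le> ?B ^ r" using B1 \<open>j \<in> {..r}\<close> by (intro power_increasing) auto
    finally show "?G ^ j \<le> ?B ^ r" .
  qed (use p in auto)
  also have "\<dots> = (1 - p) ^ (m choose 2) * (real r + 1) * ?B ^ r" by simp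
  finally show ?thesis .
qed

definition excess_biclique_subgraph :: "nat \<Rightarrow> nat set set \<Rightarrow> nat \<Rightarrow> bool" where
  "excess_biclique_subgraph n E k \<longleftrightarrow> (\<exists>S. S \<subseteq> {..<n} \<and> card S \<ge> k + 1 \<and>
           biclique_partitionable (induced_edges E S) (card S - k))"

lemma gnp_prob_excess_biclique_le:
  fixes p v :: real and k :: nat
  assumes p: "0 < p" "p < 1" and v: "v = sqrt (p / (1 - p))" "v \<le> 1"
  shows "gnp_prob n p (\<lambda>E. excess_biclique_subgraph n E k) \<le>
     (\<Sum>m\<in>{k+1..n}. indep_expectation n p m * (real (m - k) + 1) * ((1 + v^3) ^ (2 * m) / v ^ 4) ^ (m - k))"
proof -
  let ?X = "Sigma {k+1..n} (subsets_of_card n)"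
  have finX: "finite ?X" using finite_subsets_of_card by (intro finite_SigmaI) auto
  have "gnp_prob n p (\<lambda>E. \<exists>S. S \<subseteq> {..<n} \<and> card S \<ge> k + 1 \<and>
           biclique_partitionable (induced_edges E S) (card S - k)) \<le>
        gnp_prob n p (\<lambda>E. \<exists>x\<in>?X. biclique_partitionable (induced_edges E (snd x)) (fst x - k))"
  proof (intro gnp_prob_mono)
    fix E assume "\<exists>S. S \<subseteq> {..<n} \<and> card S \<ge> k + 1 \<and> biclique_partitionable (induced_edges E S) (card S - k)"
    then obtain S where S: "S \<subseteq> {..<n}" "card S \<ge> k + 1" "biclique_partitionable (induced_edges E S) (card S - k)"
      by blast
    have "card S \<le> n" using card_mono[OF _ S(1)] by simp
    hence "(card S, S) \<in> ?X" using S unfolding subsets_of_card_def by auto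
    thus "\<exists>x\<in>?X. biclique_partitionable (induced_edges E (snd x)) (fst x - k)" using S(3) by force
  qed (use p in auto)
  also have "\<dots> \<le> (\<Sum>x\<in>?X. gnp_prob n p (\<lambda>E. biclique_partitionable (induced_edges E (snd x)) (fst x - k)))"
    using p by (intro gnp_prob_Bex_le finX) auto
  also have "\<dots> \<le> (\<Sum>x\<in>?X. (1 - p) ^ (fst x choose 2) * (real (fst x - k) + 1) * ((1 + v^3) ^ (2 * fst x) / v ^ 4) ^ (fst x - k))"
    by (intro sum_mono gnp_prob_biclique_partitionable_le[OF p v]) (auto simp: subsets_of_card_def)
  also have "\<dots> = (\<Sum>m\<in>{k+1..n}. indep_expectation n p m * (real (m - k) + 1) * ((1 + v^3) ^ (2 * m) / v ^ 4) ^ (m - k))"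
    by (simp add: sum_Sigma_nested finite_subsets_of_card card_subsets_of_card indep_expectation_def mult.assoc)
  finally show ?thesis unfolding excess_biclique_subgraph_def .
qed

lemma real_choose_two: "real (i choose 2) = real i * (real i - 1) / 2"
proof (induction i)
  case 0 thus ?case by simp
next
  case (Suc i)
  have "Suc i choose 2 = i + (i choose 2)"
    using binomial_Suc_Suc[of i 1] by (simp add: numeral_2_eq_2)
  thus ?case using Suc by (simp add: field_simps)
qed

lemma sum_geometric_le:
  fixes x :: real assumes "0 \<le> x" "x < 1"
  shows "(\<Sum>m\<in>{a..b}. x ^ (m - a)) \<le> 1 / (1 - x)"
proof (cases "a \<le> b")
  case True
  have "(\<Sum>m\<in>{a..b}. x ^ (m - a)) = (\<Sum>u\<in>{0..b-a}. x ^ u)"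
    using sum.atLeastAtMost_shift_0[OF True, of "\<lambda>m. x ^ (m - a)"] by (simp add: comp_def)
  also have "\<dots> = (\<Sum>u<Suc (b-a). x ^ u)" by (rule sum.cong) auto
  also have "\<dots> = (1 - x ^ Suc (b - a)) / (1 - x)" using assms by (simp only: sum_gp_strict) auto
  also have "\<dots> \<le> 1 / (1 - x)" using assms by (intro divide_right_mono) auto
  finally show ?thesis .
next
  case False thus ?thesis using assms by simp
qed

lemma binomial_Suc_eq: "real (n choose Suc m) * real (Suc m) = real (n choose m) * (real n - real m)"
proof (cases "m \<le> n")
  case True
  have "Suc m * (n choose Suc m) = (n - m) * (n choose m)"
    using binomial_absorption[of m n] binomial_absorb_comp[of n m] by simp
  hence "real (Suc m * (n choose Suc m)) = real ((n - m) * (n choose m))" by simp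
  thus ?thesis using True by (simp add: of_nat_diff algebra_simps)
next
  case False thus ?thesis by (simp add: binomial_eq_0)
qed

lemma binomial_add_le:
  "real (n choose (k+1+t)) \<le> real (n choose (k+1)) * (real n / real (k+1)) ^ t"
proof (induction t)
  case 0 thus ?case by simp
next
  case (Suc t)
  let ?m = "k+1+t"
  have "real (n choose Suc ?m) * real (Suc ?m) \<le> real (n choose ?m) * real n"
    unfolding binomial_Suc_eq by (intro mult_left_mono) auto
  hence "real (n choose Suc ?m) \<le> real (n choose ?m) * real n / real (Suc ?m)"
    by (simp add: field_simps)
  also have "\<dots> \<le> real (n choose ?m) * real n / real (k+1)"
    by (intro divide_left_mono mult_nonneg_nonneg) auto
  also have "\<dots> \<le> real (n choose (k+1)) * (real n / real (k+1)) ^ t * real n / real (k+1)"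
    using Suc by (intro divide_right_mono mult_right_mono) auto
  also have "\<dots> = real (n choose (k+1)) * (real n / real (k+1)) ^ Suc t"
    by (simp add: power_Suc field_simps)
  finally show ?case by simp
qed

lemma binomial_le_step_up:
  assumes "k + 1 \<le> m"
  shows "real (n choose m) \<le> real (n choose (k+1)) * (real n / real (k+1)) ^ (m - k - 1)"
  using binomial_add_le[of n k "m - k - 1"] assms by simp

lemma choose_two_add: "t \<ge> 1 \<Longrightarrow> (k + t) choose 2 = ((k+1) choose 2) + k * (t - 1) + (t choose 2)"
proof -
  assume t: "t \<ge> 1"
  have "real ((k + t) choose 2) = real (((k+1) choose 2) + k * (t - 1) + (t choose 2))"
    using t by (simp add: real_choose_two of_nat_diff field_simps)
  thus ?thesis by (simp only: of_nat_eq_iff)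
qed

lemma pow_le_from_indep_expectation:
  fixes p :: real
  assumes p: "0 < p" "p < 1" and kn: "k + 1 \<le> n" and F1: "indep_expectation n p (k + 1) \<le> 1"
  shows "(1 - p) ^ k \<le> ((real k + 1) / real n)\<^sup>2"
proof -
  have F: "real (n choose (k+1)) * (1 - p) ^ ((k+1) choose 2) \<le> 1"
    using F1 unfolding indep_expectation_def .
  define x where "x = (real n / real (k + 1))\<^sup>2 * (1 - p) ^ k"
  have x0: "x \<ge> 0" unfolding x_def using p by auto
  have e: "2 * ((k+1) choose 2) = k * (k+1)"
  proof -
    have "real (2 * ((k+1) choose 2)) = real (k * (k+1))" by (simp add: real_choose_two field_simps)
    thus ?thesis by (simp only: of_nat_eq_iff)
  qed
  have "(real n / real (k+1)) ^ (k+1) \<le> real (n choose (k+1))"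
    using binomial_ge_n_over_k_pow_k[OF kn] by simp
  hence "(real n / real (k+1)) ^ (k+1) * (1 - p) ^ ((k+1) choose 2) \<le> 1"
    using F p by (meson mult_right_mono order_trans zero_le_power diff_ge_0_iff_ge less_imp_le)
  hence "((real n / real (k+1)) ^ (k+1) * (1 - p) ^ ((k+1) choose 2))\<^sup>2 \<le> 1"
    using p by (simp add: power_le_one)
  also have "((real n / real (k+1)) ^ (k+1) * (1 - p) ^ ((k+1) choose 2))\<^sup>2 = x ^ (k+1)"
  proof -
    define a where "a = real n / real (k+1)"
    define z where "z = 1 - p"
    have "(a ^ (k+1) * z ^ ((k+1) choose 2))\<^sup>2 = a ^ (2*(k+1)) * z ^ (2*((k+1) choose 2))"
      by (simp only: power_mult_distrib power_mult[symmetric] mult.commute)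
    also have "\<dots> = a ^ (2*(k+1)) * z ^ (k * (k+1))" using e by simp
    also have "\<dots> = (a^2) ^ (k+1) * (z^k) ^ (k+1)" by (simp only: power_mult)
    also have "\<dots> = (a^2 * z^k) ^ (k+1)" by (simp add: power_mult_distrib)
    finally show ?thesis unfolding x_def a_def z_def by simp
  qed
  finally have "x ^ (k+1) \<le> 1" .
  hence "x \<le> 1" using power_le_one_iff[OF x0, of "k+1"] by simp
  hence "(real n)\<^sup>2 * (1 - p) ^ k \<le> (real (k+1))\<^sup>2" unfolding x_def using kn
    by (simp add: power_divide field_simps del: of_nat_add)
  thus ?thesis using kn by (simp add: power_divide field_simps)
qed

lemma excess_exponent_le:
  fixes p v :: real
  assumes "0 \<le> p" "p \<le> 1" "0 \<le> v" "4 * v^3 \<le> p" "4 * real k * v^3 \<le> 1" "t \<ge> 1"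
  shows "- p * (real t * (real t - 1) / 2) + 2 * real (k + t) * real t * v^3 \<le> real t"
proof -
  have a: "2 * real k * real t * v^3 \<le> real t / 2"
    using mult_right_mono[OF assms(5), of "real t"] by (simp add: algebra_simps)
  have b: "2 * real t * real t * v^3 \<le> p * real t * real t / 2"
    using mult_right_mono[OF assms(4), of "real t * real t"] by (simp add: algebra_simps)
  have c: "p * real t / 2 \<le> real t / 2" using assms by (simp add: mult_right_le_one_le)
  have e: "- p * (real t * (real t - 1) / 2) + 2 * real (k + t) * real t * v^3 =
     2 * real k * real t * v^3 + 2 * real t * real t * v^3 - p * real t * real t / 2 + p * real t / 2"
    by (simp add: field_simps)
  show ?thesis unfolding e using a b c by linarith
qed

lemma indep_expectation_add_le:
  fixes p :: real
  assumes p: "0 < p" "p < 1" and kn: "k + 1 \<le> n" and F1: "indep_expectation n p (k + 1) \<le> 1"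
    and t: "1 \<le> t"
  shows "indep_expectation n p (k + t)
     \<le> indep_expectation n p (k + 1) * ((real k + 1) / real n) ^ (t - 1) * (1 - p) ^ (t choose 2)"
proof -
  define z where "z = 1 - p"
  define \<delta> where "\<delta> = (real k + 1) / real n"
  have z: "0 < z" using p unfolding z_def by simp
  have n0: "real n > 0" using kn by simp
  have F0: "0 \<le> indep_expectation n p (k + 1)" using p unfolding indep_expectation_def by simp
  have Z: "z ^ ((k+t) choose 2) = z ^ ((k+1) choose 2) * (z ^ k) ^ (t - 1) * z ^ (t choose 2)"
    using choose_two_add[OF t, of k] by (simp add: power_add power_mult)
  have nD: "(real n / real (k+1)) * z ^ k \<le> \<delta>"
  proof -
    have "(real n / real (k+1)) * z ^ k \<le> (real n / real (k+1)) * \<delta>\<^sup>2"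
      using pow_le_from_indep_expectation[OF p kn F1] unfolding z_def \<delta>_def by (intro mult_left_mono) auto
    also have "\<dots> = (real n / real (k+1) * \<delta>) * \<delta>" by (simp add: power2_eq_square)
    also have "real n / real (k+1) * \<delta> = 1" unfolding \<delta>_def using n0 by simp
    finally show ?thesis by simp
  qed
  have "indep_expectation n p (k + t) \<le> real (n choose (k+1)) * (real n / real (k+1)) ^ (t - 1) * z ^ ((k+t) choose 2)"
    unfolding indep_expectation_def z_def using binomial_le_step_up[of k "k+t" n] t p
    by (intro mult_right_mono) auto
  also have "\<dots> = indep_expectation n p (k + 1) * ((real n / real (k+1)) * z ^ k) ^ (t - 1) * z ^ (t choose 2)"
    unfolding Z by (simp only: indep_expectation_def z_def power_mult_distrib mult_ac)
  also have "\<dots> \<le> indep_expectation n p (k + 1) * \<delta> ^ (t - 1) * z ^ (t choose 2)"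
    using nD F0 z by (intro mult_right_mono mult_left_mono power_mono) auto
  finally show ?thesis unfolding z_def \<delta>_def .
qed

lemma excess_factor_le:
  fixes p v :: real
  assumes p: "0 < p" "p \<le> 1/2" and v: "0 < v" and h1: "4 * v^3 \<le> p" and h2: "4 * real k * v^3 \<le> 1"
    and t: "1 \<le> t"
  shows "(1 - p) ^ (t choose 2) * ((1 + v^3) ^ (2 * (k+t)) / v ^ 4) ^ t \<le> exp (real t) / (v^4) ^ t"
proof -
  have "(1 + v^3) ^ (2 * (k+t) * t) \<le> exp (v^3) ^ (2 * (k+t) * t)"
    using v by (intro power_mono) (auto simp: add.commute)
  also have "\<dots> = exp (2 * real (k+t) * real t * v^3)"
    by (simp add: exp_of_nat_mult[symmetric] algebra_simps)
  finally have B: "((1 + v^3) ^ (2 * (k+t)) / v ^ 4) ^ t \<le> exp (2 * real (k+t) * real t * v^3) / (v^4) ^ t"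
    using v by (simp add: power_divide power_mult[symmetric] divide_right_mono)
  have "(1 - p) ^ (t choose 2) \<le> exp (-p) ^ (t choose 2)"
    using p exp_ge_add_one_self[of "-p"] by (intro power_mono) auto
  also have "\<dots> = exp (- p * (real t * (real t - 1) / 2))"
    by (simp add: exp_of_nat_mult[symmetric] real_choose_two algebra_simps)
  finally have Z: "(1 - p) ^ (t choose 2) \<le> exp (- p * (real t * (real t - 1) / 2))" .
  have "(1 - p) ^ (t choose 2) * ((1 + v^3) ^ (2 * (k+t)) / v ^ 4) ^ t
      \<le> exp (- p * (real t * (real t - 1) / 2)) * (exp (2 * real (k+t) * real t * v^3) / (v^4) ^ t)"
    using Z B p v by (intro mult_mono) auto
  also have "\<dots> = exp (- p * (real t * (real t - 1) / 2) + 2 * real (k+t) * real t * v^3) / (v^4) ^ t"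
    unfolding exp_add by simp
  also have "\<dots> \<le> exp (real t) / (v^4) ^ t"
    using excess_exponent_le[of p v k t] p v h1 h2 t by (intro divide_right_mono) auto
  finally show ?thesis .
qed

lemma excess_term_le:
  fixes p v :: real and k n t :: nat
  assumes p: "0 < p" "p \<le> 1/2" and v: "0 < v" and kn: "k + 1 \<le> n"
    and F1: "indep_expectation n p (k + 1) \<le> 1"
    and h1: "4 * v^3 \<le> p" and h2: "4 * real k * v^3 \<le> 1"
    and h3: "exp 1 * (real k + 1) / (real n * v^4) \<le> 1/4"
    and t: "1 \<le> t"
  shows "indep_expectation n p (k + t) * (real t + 1) * ((1 + v^3) ^ (2 * (k+t)) / v ^ 4) ^ t
     \<le> indep_expectation n p (k + 1) * (exp 1 / v^4) * 2 * (1/2) ^ (t - 1)"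
proof -
  define Fk where "Fk = indep_expectation n p (k + 1)"
  define \<delta> where "\<delta> = (real k + 1) / real n"
  define \<rho> where "\<rho> = exp 1 * \<delta> / v^4"
  have Fk0: "Fk \<ge> 0" unfolding Fk_def indep_expectation_def using p by simp
  have \<delta>0: "\<delta> \<ge> 0" unfolding \<delta>_def by simp
  have \<rho>: "0 \<le> \<rho>" "\<rho> \<le> 1/4" using h3 \<delta>0 v unfolding \<rho>_def \<delta>_def by (auto simp: field_simps)
  have t2: "real t + 1 \<le> 2 * 2 ^ (t - 1)"
  proof -
    have "t + 1 \<le> 2 ^ t" by (induction t) auto
    hence "real (t + 1) \<le> real (2 ^ t)" by (simp only: of_nat_le_iff)
    thus ?thesis using t by (cases t) auto
  qed
  have "indep_expectation n p (k + t) \<le> Fk * \<delta> ^ (t - 1) * (1 - p) ^ (t choose 2)"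
    using indep_expectation_add_le[OF p(1) _ kn F1 t] p unfolding Fk_def \<delta>_def by simp
  hence "indep_expectation n p (k + t) * (real t + 1) * ((1 + v^3) ^ (2 * (k+t)) / v ^ 4) ^ t
      \<le> Fk * \<delta> ^ (t - 1) * (1 - p) ^ (t choose 2) * (real t + 1) * ((1 + v^3) ^ (2 * (k+t)) / v ^ 4) ^ t"
    using v by (intro mult_right_mono) auto
  also have "\<dots> = Fk * \<delta> ^ (t - 1) * (real t + 1) * ((1 - p) ^ (t choose 2) * ((1 + v^3) ^ (2 * (k+t)) / v ^ 4) ^ t)"
    by (simp only: mult_ac)
  also have "\<dots> \<le> Fk * \<delta> ^ (t - 1) * (real t + 1) * (exp (real t) / (v^4) ^ t)"
    using excess_factor_le[OF p v h1 h2 t] Fk0 \<delta>0 by (intro mult_left_mono) auto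
  also have "\<dots> = Fk * (exp 1 / v^4) * (real t + 1) * \<rho> ^ (t - 1)"
  proof -
    have "exp (real t) = exp 1 ^ t" by (simp add: exp_of_nat_mult[symmetric])
    also have "\<dots> = exp 1 * exp 1 ^ (t - 1)" using t by (simp add: power_Suc[symmetric])
    finally have "exp (real t) = exp 1 * exp 1 ^ (t - 1)" .
    moreover have "(v^4) ^ t = v^4 * (v^4) ^ (t - 1)" using t by (simp add: power_Suc[symmetric])
    ultimately show ?thesis unfolding \<rho>_def using v by (simp add: power_mult_distrib power_divide field_simps)
  qed
  also have "\<dots> \<le> Fk * (exp 1 / v^4) * (2 * 2 ^ (t - 1)) * \<rho> ^ (t - 1)"
    using t2 Fk0 v \<rho> by (intro mult_right_mono mult_left_mono) auto
  also have "\<dots> = Fk * (exp 1 / v^4) * 2 * (2 * \<rho>) ^ (t - 1)" by (simp add: power_mult_distrib)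
  also have "\<dots> \<le> Fk * (exp 1 / v^4) * 2 * (1/2) ^ (t - 1)"
    using \<rho> Fk0 v by (intro mult_left_mono power_mono) auto
  finally show ?thesis unfolding Fk_def .
qed

lemma excess_sum_le:
  fixes p v :: real and k n :: nat
  assumes p: "0 < p" "p \<le> 1/2" and v: "0 < v" and kn: "k + 1 \<le> n"
    and F1: "indep_expectation n p (k + 1) \<le> 1"
    and h1: "4 * v^3 \<le> p" and h2: "4 * real k * v^3 \<le> 1"
    and h3: "exp 1 * (real k + 1) / (real n * v^4) \<le> 1/4"
  shows "(\<Sum>m\<in>{k+1..n}. indep_expectation n p m * (real (m - k) + 1) * ((1 + v^3) ^ (2 * m) / v ^ 4) ^ (m - k))
     \<le> 4 * exp 1 * indep_expectation n p (k + 1) / v^4"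
proof -
  define Fk where "Fk = indep_expectation n p (k + 1)"
  have Fk0: "Fk \<ge> 0" unfolding Fk_def indep_expectation_def using p by simp
  have "(\<Sum>m\<in>{k+1..n}. indep_expectation n p m * (real (m - k) + 1) * ((1 + v^3) ^ (2 * m) / v ^ 4) ^ (m - k))
      \<le> (\<Sum>m\<in>{k+1..n}. Fk * (exp 1 / v^4) * 2 * (1/2) ^ (m - (k+1)))"
  proof (intro sum_mono)
    fix m assume m: "m \<in> {k+1..n}"
    define t where "t = m - k"
    have "1 \<le> t" "m = k + t" "t - 1 = m - (k+1)" using m unfolding t_def by auto
    thus "indep_expectation n p m * (real (m - k) + 1) * ((1 + v^3) ^ (2 * m) / v ^ 4) ^ (m - k)
        \<le> Fk * (exp 1 / v^4) * 2 * (1/2) ^ (m - (k+1))"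
      using excess_term_le[OF p v kn F1 h1 h2 h3, of t] unfolding Fk_def by simp
  qed
  also have "\<dots> = Fk * (exp 1 / v^4) * 2 * (\<Sum>m\<in>{k+1..n}. (1/2::real) ^ (m - (k+1)))"
    by (simp add: sum_distrib_left)
  also have "\<dots> \<le> Fk * (exp 1 / v^4) * 2 * 2"
    using sum_geometric_le[of "1/2::real" "k+1" n] Fk0 by (intro mult_left_mono) auto
  finally show ?thesis unfolding Fk_def by (simp add: field_simps)
qed

lemma power_div_fact_le_exp: assumes "0 \<le> (x::real)" shows "x ^ n / fact n \<le> exp x"
proof -
  have s: "summable (\<lambda>m. x ^ m /\<^sub>R fact m)" by (rule summable_exp_generic)
  have "sum (\<lambda>m. x ^ m /\<^sub>R fact m) {n} \<le> suminf (\<lambda>m. x ^ m /\<^sub>R fact m)"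
    by (rule sum_le_suminf[OF s]) (auto simp: assms)
  thus ?thesis by (simp add: exp_def divide_inverse mult.commute)
qed

lemma binomial_le_exp_pow:
  assumes "1 \<le> s"
  shows "real (n choose s) \<le> (exp 1 * real n / real s) ^ s"
proof -
  have a: "real (n choose s) * fact s \<le> real n ^ s"
    using binomial_fact_pow[of n s] by (metis of_nat_fact of_nat_le_iff of_nat_mult of_nat_power)
  have b: "real s ^ s / fact s \<le> exp (real s)" by (rule power_div_fact_le_exp) simp
  have fpos: "(fact s :: real) > 0" by simp
  have spos: "real s > 0" using assms by simp
  have "real (n choose s) \<le> real n ^ s / fact s" using a fpos by (simp add: field_simps)
  also have "\<dots> = (real n / real s) ^ s * (real s ^ s / fact s)"
    using spos by (simp add: power_divide field_simps)
  also have "\<dots> \<le> (real n / real s) ^ s * exp (real s)"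
    using b by (intro mult_left_mono) auto
  also have "\<dots> = (exp 1 * real n / real s) ^ s"
    by (simp add: power_mult_distrib exp_of_nat_mult[symmetric] field_simps)
  finally show ?thesis .
qed

lemma binomial_diff_le:
  assumes "i \<le> s" "s < n"
  shows "real (n choose (s - i)) \<le> real (n choose s) * (real s / (real n - real s)) ^ i"
  using assms(1)
proof (induction i)
  case 0 thus ?case by simp
next
  case (Suc i)
  define m where "m = s - Suc i"
  have m: "Suc m = s - i" "m < s" using Suc.prems unfolding m_def by auto
  have ns: "real n - real s > 0" using assms by simp
  have nm: "real n - real m > 0" using m assms by simp
  have "real (n choose m) * (real n - real m) = real (n choose Suc m) * real (Suc m)"
    using binomial_Suc_eq[of n m] by simp
  hence e: "real (n choose m) = real (n choose Suc m) * real (Suc m) / (real n - real m)"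
    using nm by (simp add: field_simps)
  have "real (Suc m) / (real n - real m) \<le> real s / (real n - real s)"
    using m ns nm by (intro frac_le) auto
  hence "real (n choose Suc m) * (real (Suc m) / (real n - real m)) \<le> real (n choose Suc m) * (real s / (real n - real s))"
    by (intro mult_left_mono) auto
  hence "real (n choose m) \<le> real (n choose Suc m) * (real s / (real n - real s))"
    unfolding e by simp
  also have "\<dots> \<le> real (n choose s) * (real s / (real n - real s)) ^ i * (real s / (real n - real s))"
    using Suc m ns by (intro mult_right_mono) auto
  finally show ?case unfolding m_def by (simp add: power_Suc algebra_simps)
qed

lemma sum_geometric_rev_le:
  fixes x :: real assumes "0 \<le> x" "x < 1"
  shows "(\<Sum>i\<in>{0..s}. x ^ (s - i)) \<le> 1 / (1 - x)"
proof -
  have "(\<Sum>i\<in>{0..s}. x ^ (s - i)) = (\<Sum>i\<in>{0..s}. x ^ (s + 0 - (s + 0 - i)))"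
    by (subst sum.atLeastAtMost_rev) simp
  also have "\<dots> = (\<Sum>i\<in>{0..s}. x ^ (i - 0))" by (intro sum.cong) auto
  also have "\<dots> \<le> 1 / (1 - x)" by (rule sum_geometric_le[OF assms])
  finally show ?thesis .
qed

lemma power_one_minus_eq_exp:
  fixes p :: real assumes "p < 1"
  shows "(1 - p) ^ N = exp (ln (1 - p) * real N)"
proof -
  have "exp (ln (1 - p) * real N) = exp (ln (1 - p)) ^ N" by (simp add: exp_of_nat_mult[symmetric] mult.commute)
  thus ?thesis using assms by simp
qed

lemma overlap_weight_eq_exp:
  fixes p :: real assumes "p < 1"
  shows "overlap_weight p i = exp (- ln (1 - p) * (real i - 1) / 2) ^ i"
proof -
  have "exp (- ln (1 - p) * (real i - 1) / 2) ^ i = exp (- (ln (1 - p) * real (i choose 2)))"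
    by (simp add: exp_of_nat_mult[symmetric] real_choose_two field_simps)
  thus ?thesis unfolding overlap_weight_def power_one_minus_eq_exp[OF assms] by (simp add: exp_minus inverse_eq_divide)
qed

lemma ln_bound_of_indep_expectation_ge_1:
  fixes p :: real
  assumes p: "0 < p" "p < 1" and s: "1 \<le> s" and Fs: "1 \<le> indep_expectation n p s"
  shows "- ln (1 - p) * (real s - 1) / 2 \<le> ln (exp 1 * real n / real s)"
proof -
  define L where "L = - ln (1 - p)"
  have n: "s \<le> n"
  proof (rule ccontr)
    assume "\<not> s \<le> n"
    hence "indep_expectation n p s = 0" by (simp add: indep_expectation_def binomial_eq_0)
    thus False using Fs by simp
  qed
  have "1 \<le> real (n choose s) * exp (- L * real (s choose 2))"
    using Fs p unfolding indep_expectation_def power_one_minus_eq_exp[OF p(2)] L_def by simp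
  hence "exp (L * real (s choose 2)) \<le> real (n choose s)" by (simp add: exp_minus field_simps)
  also have "\<dots> \<le> (exp 1 * real n / real s) ^ s" using binomial_le_exp_pow[of s n] s by simp
  finally have "L * real (s choose 2) \<le> real s * ln (exp 1 * real n / real s)"
    using s n by (subst (asm) ln_ge_iff[symmetric]) (auto simp: ln_realpow)
  hence "real s * (L * (real s - 1) / 2) \<le> real s * ln (exp 1 * real n / real s)"
    by (simp add: real_choose_two algebra_simps)
  hence "L * (real s - 1) / 2 \<le> ln (exp 1 * real n / real s)"
    by (rule mult_left_le_imp_le) (use s in simp)
  thus ?thesis unfolding L_def .
qed

lemma overlap_term_le:
  fixes p :: real
  assumes p: "p < 1" and i: "i \<le> s" and s: "s < n"
  shows "overlap_term n p s i
     \<le> real (s choose i) * (real s / (real n - real s)) ^ i * exp (- ln (1 - p) * (real i - 1) / 2) ^ i"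
proof -
  have "real ((n - s) choose (s - i)) \<le> real (n choose (s - i))"
    using binomial_right_mono[of "n - s" n "s - i"] by simp
  also have "\<dots> \<le> real (n choose s) * (real s / (real n - real s)) ^ i"
    using binomial_diff_le[OF i s] .
  finally have "real ((n - s) choose (s - i)) / real (n choose s) \<le> (real s / (real n - real s)) ^ i"
    using s by (simp add: divide_le_eq mult.commute)
  thus ?thesis unfolding overlap_term_def overlap_weight_eq_exp[OF p] times_divide_eq_right[symmetric]
    by (intro mult_right_mono mult_left_mono) auto
qed

lemma overlap_term_le_small:
  fixes p K \<eta> :: real
  assumes p: "0 < p" "p < 1" and s: "2 \<le> s" and Fs: "1 \<le> indep_expectation n p s"
    and K: "real s \<le> K" "K \<le> real n / 2" and \<eta>: "0 < \<eta>" "\<eta> \<le> 1"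
    and i: "i \<le> s" "real i \<le> \<eta> * real s"
  shows "overlap_term n p s i \<le> (K\<^sup>2 / (real n / 2) * (exp 1 * real n) powr \<eta>) ^ i"
proof -
  define L where "L = - ln (1 - p)"
  have n0: "real n > 0" and nsn: "real n - real s \<ge> real n / 2" using K s by auto
  have L0: "0 < L" unfolding L_def using p by simp
  have "L * (real i - 1) / 2 \<le> \<eta> * (L * (real s - 1) / 2)"
  proof -
    have "real i - 1 \<le> \<eta> * (real s - 1)" using i \<eta> by (simp add: algebra_simps)
    hence "L * (real i - 1) \<le> L * (\<eta> * (real s - 1))" using L0 by (intro mult_left_mono) auto
    thus ?thesis by (simp add: field_simps)
  qed
  also have "\<dots> \<le> \<eta> * ln (exp 1 * real n / real s)"
    using ln_bound_of_indep_expectation_ge_1[OF p _ Fs] s \<eta> unfolding L_def by (intro mult_left_mono) auto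
  also have "\<dots> \<le> \<eta> * ln (exp 1 * real n)"
    using s n0 \<eta> by (intro mult_left_mono) (auto simp: field_simps)
  finally have e: "exp (L * (real i - 1) / 2) \<le> (exp 1 * real n) powr \<eta>"
    using n0 by (simp add: powr_def)
  have c: "real (s choose i) \<le> real s ^ i"
    using binomial_le_pow[OF i(1)] by (simp only: of_nat_le_iff of_nat_power[symmetric])
  have r: "real s * (real s / (real n - real s)) \<le> K\<^sup>2 / (real n / 2)"
    using K s nsn n0 by (simp only: times_divide_eq_right)
      (intro frac_le, auto simp: power2_eq_square intro: mult_mono)
  have "overlap_term n p s i \<le> real (s choose i) * (real s / (real n - real s)) ^ i * exp (L * (real i - 1) / 2) ^ i"
    unfolding L_def using overlap_term_le[OF p(2) i(1)] s K by simp
  also have "\<dots> \<le> real s ^ i * (real s / (real n - real s)) ^ i * ((exp 1 * real n) powr \<eta>) ^ i"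
    using c e nsn n0 by (intro mult_mono power_mono) auto
  also have "\<dots> = (real s * (real s / (real n - real s)) * (exp 1 * real n) powr \<eta>) ^ i"
    by (simp only: power_mult_distrib)
  also have "\<dots> \<le> (K\<^sup>2 / (real n / 2) * (exp 1 * real n) powr \<eta>) ^ i"
    using r s nsn by (intro power_mono mult_right_mono) auto
  finally show ?thesis .
qed

lemma overlap_medium_base_le:
  fixes K \<theta> :: real
  assumes s: "2 \<le> s" and K: "real s \<le> K" "K \<le> real n / 2" and \<theta>: "0 < \<theta>" "\<theta> < 1"
  shows "real s / (real n - real s) * (exp 1 * real n / real s) powr \<theta>
     \<le> 2 * exp 1 * (K / real n) powr (1 - \<theta>)"
proof -
  have n0: "real n > 0" and sn: "real s / real n > 0" using K s by auto
  have "real s / (real n - real s) \<le> 2 * (real s / real n)"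
    using K s by (simp add: field_simps)
  moreover have "(exp 1 * real n / real s) powr \<theta> \<le> exp 1 * (real s / real n) powr (- \<theta>)"
  proof -
    have "(exp 1 * real n / real s) powr \<theta> = exp 1 powr \<theta> * (real s / real n) powr (- \<theta>)"
      using n0 s by (simp add: powr_mult powr_minus_divide powr_divide field_simps)
    moreover have "exp 1 powr \<theta> \<le> exp 1" using \<theta> by (simp add: powr_def)
    ultimately show ?thesis by (simp add: mult_right_mono)
  qed
  ultimately have "real s / (real n - real s) * (exp 1 * real n / real s) powr \<theta>
      \<le> 2 * (real s / real n) * (exp 1 * (real s / real n) powr (- \<theta>))"
    using sn by (intro mult_mono) auto
  also have "\<dots> = 2 * exp 1 * ((real s / real n) powr 1 * (real s / real n) powr (- \<theta>))"
    using sn by simp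
  also have "\<dots> = 2 * exp 1 * (real s / real n) powr (1 - \<theta>)"
    by (simp only: powr_add[symmetric] diff_conv_add_uminus)
  also have "\<dots> \<le> 2 * exp 1 * (K / real n) powr (1 - \<theta>)"
    using K n0 \<theta> by (intro mult_left_mono powr_mono2 divide_right_mono) auto
  finally show ?thesis .
qed

lemma overlap_term_le_medium:
  fixes p K \<eta> \<theta> :: real
  assumes p: "0 < p" "p < 1" and s: "2 \<le> s" and Fs: "1 \<le> indep_expectation n p s"
    and K: "real s \<le> K" "K \<le> real n / 2" and \<theta>: "0 < \<theta>" "\<theta> < 1"
    and i: "\<eta> * real s < real i" "real i \<le> \<theta> * real s"
    and B: "2 * exp 1 * (K / real n) powr (1 - \<theta>) \<le> 1"
  shows "overlap_term n p s i \<le> 2 ^ s * (2 * exp 1 * (K / real n) powr (1 - \<theta>)) powr (\<eta> * real s)"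
proof -
  define L where "L = - ln (1 - p)"
  define B2 where "B2 = 2 * exp 1 * (K / real n) powr (1 - \<theta>)"
  define w where "w = real s / (real n - real s) * (exp 1 * real n / real s) powr \<theta>"
  have n0: "real n > 0" and nsn: "real n - real s \<ge> real n / 2" using K s by auto
  have L0: "0 < L" unfolding L_def using p by simp
  have "i \<le> s" using i \<theta> s by (metis of_nat_le_iff mult_left_le_one_le of_nat_0_le_iff less_imp_le order_trans)
  have "L * (real i - 1) / 2 \<le> \<theta> * (L * (real s - 1) / 2)"
  proof -
    have "real i - 1 \<le> \<theta> * (real s - 1)" using i \<theta> by (simp add: algebra_simps)
    hence "L * (real i - 1) \<le> L * (\<theta> * (real s - 1))" using L0 by (intro mult_left_mono) auto
    thus ?thesis by (simp add: field_simps)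
  qed
  also have "\<dots> \<le> \<theta> * ln (exp 1 * real n / real s)"
    using ln_bound_of_indep_expectation_ge_1[OF p _ Fs] s \<theta> unfolding L_def by (intro mult_left_mono) auto
  finally have e: "exp (L * (real i - 1) / 2) \<le> (exp 1 * real n / real s) powr \<theta>"
    using n0 s by (simp add: powr_def)
  have "real (s choose i) \<le> real ((2::nat) ^ s)" using binomial_le_pow2[of s i] by (simp only: of_nat_le_iff)
  hence c: "real (s choose i) \<le> 2 ^ s" by simp
  have "overlap_term n p s i \<le> real (s choose i) * (real s / (real n - real s)) ^ i * exp (L * (real i - 1) / 2) ^ i"
    unfolding L_def using overlap_term_le[OF p(2) \<open>i \<le> s\<close>] s K by simp
  also have "\<dots> \<le> 2 ^ s * (real s / (real n - real s)) ^ i * ((exp 1 * real n / real s) powr \<theta>) ^ i"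
    using c e nsn n0 by (intro mult_mono power_mono) auto
  also have "\<dots> = 2 ^ s * w ^ i" unfolding w_def by (simp only: power_mult_distrib mult.assoc)
  also have "\<dots> \<le> 2 ^ s * B2 ^ i"
    using overlap_medium_base_le[OF s K \<theta>] nsn n0 unfolding w_def B2_def
    by (intro mult_left_mono power_mono) auto
  also have "\<dots> \<le> 2 ^ s * B2 powr (\<eta> * real s)"
  proof -
    have "B2 ^ i = B2 powr real i" using K s unfolding B2_def by (simp add: powr_realpow)
    also have "\<dots> \<le> B2 powr (\<eta> * real s)" using i B K s unfolding B2_def by (intro powr_mono') auto
    finally show ?thesis by simp
  qed
  finally show ?thesis unfolding B2_def .
qed

lemma overlap_large_base_le:
  fixes p K \<theta> :: real
  assumes p: "0 < p" "p \<le> 1/2" and s: "2 \<le> s" and F1: "indep_expectation n p (s + 2) \<le> 1"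
    and K: "real s + 2 \<le> K" "K \<le> real n / 2" and \<theta>: "0 < \<theta>" "\<theta> < 1"
    and i: "\<theta> * real s < real i"
  shows "real s * real n * exp (ln (1 - p) * (real s + real i - 1) / 2) \<le> 4 * K\<^sup>2 * (K / real n) powr \<theta>"
proof -
  define L where "L = - ln (1 - p)"
  define \<delta> where "\<delta> = (real s + 2) / real n"
  have n0: "real n > 0" using K by simp
  have \<delta>0: "0 \<le> \<delta>" unfolding \<delta>_def by simp
  have L0: "0 < L" and eL: "exp L \<le> 2" unfolding L_def using p by (auto simp: exp_minus field_simps)
  have D: "exp (- L * (real s + 1) / 2) \<le> \<delta>"
  proof -
    have "exp (- L * (real s + 1)) = (1 - p) ^ (s + 1)"
      using power_one_minus_eq_exp[of p "s + 1"] p unfolding L_def by (simp add: add.commute)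
    also have "\<dots> \<le> \<delta>\<^sup>2"
      using pow_le_from_indep_expectation[of p "s + 1" n] p K F1 unfolding \<delta>_def by (simp add: add.commute)
    also have "exp (- L * (real s + 1)) = (exp (- L * (real s + 1) / 2))\<^sup>2"
      by (simp add: power2_eq_square exp_add[symmetric])
    finally show ?thesis using n0 unfolding \<delta>_def by (simp add: abs_le_square_iff)
  qed
  have e2: "exp (- L * real i / 2) \<le> \<delta> powr \<theta> * 2"
  proof -
    have "- L * real i / 2 \<le> \<theta> * (- L * (real s + 1) / 2) + L * \<theta> / 2"
      using mult_left_mono[OF less_imp_le[OF i], of L] L0 by (simp add: field_simps)
    hence "exp (- L * real i / 2) \<le> exp (- L * (real s + 1) / 2) powr \<theta> * exp (L * \<theta> / 2)"
      by (simp add: exp_add[symmetric] powr_def)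
    also have "\<dots> \<le> \<delta> powr \<theta> * 2"
    proof (intro mult_mono powr_mono2)
      have "L * \<theta> / 2 \<le> L" using L0 \<theta> by (simp add: field_simps)
      thus "exp (L * \<theta> / 2) \<le> 2" using eL by (meson exp_le_cancel_iff order_trans)
    qed (use D \<theta> in auto)
    finally show ?thesis .
  qed
  have "exp (- L * (real s + real i - 1) / 2) = exp (- L * (real s + 1) / 2) * exp L * exp (- L * real i / 2)"
    by (simp add: exp_add[symmetric] field_simps)
  also have "\<dots> \<le> \<delta> * 2 * (\<delta> powr \<theta> * 2)"
    using D eL e2 \<delta>0 by (intro mult_mono) auto
  finally have "real s * real n * exp (- L * (real s + real i - 1) / 2) \<le> real s * real n * (\<delta> * 2 * (\<delta> powr \<theta> * 2))"
    by (intro mult_left_mono) auto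
  also have "\<dots> = 4 * real s * (real s + 2) * \<delta> powr \<theta>"
    using n0 unfolding \<delta>_def by (simp add: field_simps)
  also have "\<dots> \<le> 4 * K * K * (K / real n) powr \<theta>"
    using K n0 \<theta> unfolding \<delta>_def by (intro mult_mono powr_mono2 divide_right_mono) auto
  finally show ?thesis unfolding L_def by (simp add: power2_eq_square mult.assoc)
qed

lemma overlap_term_le_large:
  fixes p K \<theta> :: real
  assumes p: "0 < p" "p \<le> 1/2" and s: "2 \<le> s"
    and F1: "indep_expectation n p (s + 2) \<le> 1" and Fs: "1 \<le> indep_expectation n p s"
    and K: "real s + 2 \<le> K" "K \<le> real n / 2" and \<theta>: "0 < \<theta>" "\<theta> < 1"
    and i: "\<theta> * real s < real i" "i \<le> s"
  shows "overlap_term n p s i \<le> (4 * K\<^sup>2 * (K / real n) powr \<theta>) ^ (s - i) / indep_expectation n p s"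
proof -
  define L where "L = - ln (1 - p)"
  define j where "j = s - i"
  have n0: "real n > 0" using K by simp
  have Fs0: "indep_expectation n p s > 0" using Fs by simp
  have c1: "real (s choose i) \<le> real s ^ j"
  proof -
    have "s choose i = s choose j" unfolding j_def using binomial_symmetric[OF i(2)] .
    also have "\<dots> \<le> s ^ j" using binomial_le_pow[of j s] unfolding j_def by simp
    finally show ?thesis by (simp only: of_nat_le_iff of_nat_power[symmetric])
  qed
  have c2: "real ((n - s) choose (s - i)) \<le> real n ^ j"
  proof (cases "j \<le> n - s")
    case True
    have "(n - s) choose j \<le> (n - s) ^ j" by (rule binomial_le_pow[OF True])
    also have "\<dots> \<le> n ^ j" by (intro power_mono) auto
    finally show ?thesis unfolding j_def by (simp only: of_nat_le_iff of_nat_power[symmetric])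
  next
    case False thus ?thesis unfolding j_def by (simp add: binomial_eq_0)
  qed
  have ex: "overlap_weight p i / real (n choose s)
      = exp (- L * (real s + real i - 1) / 2) ^ j / indep_expectation n p s"
  proof -
    have d: "real (s choose 2) - real (i choose 2) = real j * (real s + real i - 1) / 2"
      unfolding j_def using i by (simp add: real_choose_two of_nat_diff field_simps)
    have "exp (- L * (real s + real i - 1) / 2) ^ j = exp (- L * (real (s choose 2) - real (i choose 2)))"
      unfolding d by (simp add: exp_of_nat_mult[symmetric] field_simps)
    also have "\<dots> = exp (ln (1 - p) * real (s choose 2) - ln (1 - p) * real (i choose 2))"
      unfolding L_def by (simp add: algebra_simps)
    also have "\<dots> = overlap_weight p i * (1 - p) ^ (s choose 2)"
      using p by (simp add: overlap_weight_def power_one_minus_eq_exp exp_diff)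
    finally have e: "exp (- L * (real s + real i - 1) / 2) ^ j = overlap_weight p i * (1 - p) ^ (s choose 2)" .
    have "(1 - p) ^ (s choose 2) \<noteq> 0" using p by simp
    thus ?thesis unfolding indep_expectation_def e by simp
  qed
  have "overlap_term n p s i
      = real (s choose i) * real ((n - s) choose (s - i)) * (overlap_weight p i / real (n choose s))"
    unfolding overlap_term_def by simp
  also have "\<dots> = real (s choose i) * real ((n - s) choose (s - i)) * exp (- L * (real s + real i - 1) / 2) ^ j
        / indep_expectation n p s"
    unfolding ex by simp
  also have "\<dots> \<le> real s ^ j * real n ^ j * exp (- L * (real s + real i - 1) / 2) ^ j / indep_expectation n p s"
    using c1 c2 Fs0 by (intro divide_right_mono mult_right_mono mult_mono) auto
  also have "\<dots> = (real s * real n * exp (- L * (real s + real i - 1) / 2)) ^ j / indep_expectation n p s"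
    by (simp add: power_mult_distrib)
  also have "\<dots> \<le> (4 * K\<^sup>2 * (K / real n) powr \<theta>) ^ j / indep_expectation n p s"
    using overlap_large_base_le[OF p s F1 K \<theta> i(1)] Fs0 unfolding L_def
    by (intro divide_right_mono power_mono) auto
  finally show ?thesis unfolding j_def .
qed

lemma sum_power_from_2_le:
  fixes b :: real assumes "0 \<le> b" "b \<le> 1/2"
  shows "(\<Sum>i\<in>{2..s}. b ^ i) \<le> 2 * b\<^sup>2"
proof -
  have "(\<Sum>i\<in>{2..s}. b ^ i) = b\<^sup>2 * (\<Sum>i\<in>{2..s}. b ^ (i - 2))"
    unfolding sum_distrib_left
  proof (intro sum.cong refl)
    fix i assume "i \<in> {2..s}"
    hence "i = 2 + (i - 2)" by auto
    thus "b ^ i = b\<^sup>2 * b ^ (i - 2)" by (metis power_add)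
  qed
  also have "\<dots> \<le> b\<^sup>2 * (1 / (1 - b))" using sum_geometric_le[of b 2 s] assms by (intro mult_left_mono) auto
  also have "\<dots> \<le> b\<^sup>2 * 2" using assms by (intro mult_left_mono) (auto simp: field_simps)
  finally show ?thesis by simp
qed

lemma of_nat_mult_power_le:
  fixes y :: real assumes y: "0 \<le> y" "y \<le> 1/2" and s: "1 \<le> s"
  shows "real s * y ^ s \<le> y"
proof -
  have "s \<le> 2 ^ (s - 1)" using s by (induction s) (auto simp: Suc_le_eq)
  hence "real s * (1/2) ^ (s - 1) \<le> 1" by (simp add: field_simps power_divide)
  moreover have "y ^ (s - 1) \<le> (1/2) ^ (s - 1)" using y by (intro power_mono) auto
  ultimately have "real s * y ^ (s - 1) \<le> 1"
    by (meson mult_left_mono of_nat_0_le_iff order_trans)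
  hence "y * (real s * y ^ (s - 1)) \<le> y" using y by (simp add: mult_left_le)
  thus ?thesis using s by (simp add: power_eq_if algebra_simps split: if_splits)
qed

lemma overlap_sum_le:
  fixes p K \<eta> \<theta> :: real
  assumes p: "0 < p" "p \<le> 1/2" and s: "2 \<le> s"
    and F1: "indep_expectation n p (s + 2) \<le> 1" and Fs: "1 \<le> indep_expectation n p s"
    and K: "real s + 2 \<le> K" "K \<le> real n / 2"
    and \<eta>: "0 < \<eta>" "\<eta> \<le> 1" and \<theta>: "0 < \<theta>" "\<theta> < 1"
    and hb1: "K\<^sup>2 / (real n / 2) * (exp 1 * real n) powr \<eta> \<le> 1/2"
    and hB2: "2 * exp 1 * (K / real n) powr (1 - \<theta>) \<le> 1"
    and hy: "2 * (2 * exp 1 * (K / real n) powr (1 - \<theta>)) powr \<eta> \<le> 1/2"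
    and hB3: "4 * K\<^sup>2 * (K / real n) powr \<theta> \<le> 1/2"
  shows "(\<Sum>i\<in>{2..s}. overlap_term n p s i)
     \<le> 2 * (K\<^sup>2 / (real n / 2) * (exp 1 * real n) powr \<eta>)\<^sup>2
        + 4 * (2 * exp 1 * (K / real n) powr (1 - \<theta>)) powr \<eta> + 2 / indep_expectation n p s"
proof -
  define b1 where "b1 = K\<^sup>2 / (real n / 2) * (exp 1 * real n) powr \<eta>"
  define B2 where "B2 = 2 * exp 1 * (K / real n) powr (1 - \<theta>)"
  define B3 where "B3 = 4 * K\<^sup>2 * (K / real n) powr \<theta>"
  define y where "y = 2 * B2 powr \<eta>"
  define F where "F = indep_expectation n p s"
  have n0: "real n > 0" and K': "real s \<le> K" using K by auto
  have b1: "0 \<le> b1" "b1 \<le> 1/2" unfolding b1_def using hb1 n0 K by auto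
  have B3: "0 \<le> B3" "B3 \<le> 1/2" unfolding B3_def using hB3 by auto
  have y: "0 \<le> y" "y \<le> 1/2" unfolding y_def B2_def using hy by auto
  have F0: "0 < F" unfolding F_def using Fs by simp
  have Y: "2 ^ s * B2 powr (\<eta> * real s) = y ^ s"
  proof -
    have "0 < B2" unfolding B2_def using K n0 by simp
    hence "B2 powr (\<eta> * real s) = (B2 powr \<eta>) ^ s" by (simp add: powr_powr powr_realpow[symmetric])
    thus ?thesis unfolding y_def by (simp add: power_mult_distrib)
  qed
  have term_le: "overlap_term n p s i \<le> b1 ^ i + y ^ s + B3 ^ (s - i) / F" if i: "i \<in> {2..s}" for i
  proof -
    consider "real i \<le> \<eta> * real s" | "\<eta> * real s < real i" "real i \<le> \<theta> * real s" | "\<theta> * real s < real i"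
      by linarith
    hence "overlap_term n p s i \<le> b1 ^ i \<or> overlap_term n p s i \<le> y ^ s \<or> overlap_term n p s i \<le> B3 ^ (s - i) / F"
    proof cases
      case 1 thus ?thesis
        using overlap_term_le_small[OF _ _ s Fs K' K(2) \<eta>] p i unfolding b1_def by auto
    next
      case 2
      have "overlap_term n p s i \<le> 2 ^ s * B2 powr (\<eta> * real s)"
        unfolding B2_def using p 2 by (intro overlap_term_le_medium[OF _ _ s Fs K' K(2) \<theta> _ _ hB2]) auto
      thus ?thesis using Y by simp
    next
      case 3 thus ?thesis
        using overlap_term_le_large[OF p s F1 Fs K \<theta>] i unfolding B3_def F_def by auto
    qed
    thus ?thesis using b1 y B3 F0 by (smt (verit) divide_nonneg_pos zero_le_power)
  qed
  have "(\<Sum>i\<in>{2..s}. overlap_term n p s i) \<le> (\<Sum>i\<in>{2..s}. b1 ^ i + y ^ s + B3 ^ (s - i) / F)"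
    by (rule sum_mono) (rule term_le)
  also have "\<dots> = (\<Sum>i\<in>{2..s}. b1 ^ i) + (\<Sum>i\<in>{2..s}. y ^ s) + (\<Sum>i\<in>{2..s}. B3 ^ (s - i)) / F"
    by (simp only: sum.distrib sum_divide_distrib)
  finally have "(\<Sum>i\<in>{2..s}. overlap_term n p s i)
      \<le> (\<Sum>i\<in>{2..s}. b1 ^ i) + (\<Sum>i\<in>{2..s}. y ^ s) + (\<Sum>i\<in>{2..s}. B3 ^ (s - i)) / F" .
  moreover have "(\<Sum>i\<in>{2..s}. y ^ s) \<le> y"
    using of_nat_mult_power_le[OF y, of s] s zero_le_power[OF y(1), of s] by (simp add: left_diff_distrib)
  moreover have "(\<Sum>i\<in>{2..s}. B3 ^ (s - i)) / F \<le> 2 / F"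
  proof -
    have "(\<Sum>i\<in>{2..s}. B3 ^ (s - i)) \<le> (\<Sum>i\<in>{0..s}. B3 ^ (s - i))"
      using B3 by (intro sum_mono2) auto
    also have "\<dots> \<le> 1 / (1 - B3)" using sum_geometric_rev_le[of B3 s] B3 by simp
    also have "\<dots> \<le> 2" using B3 by (simp add: field_simps)
    finally show ?thesis using F0 by (simp add: divide_right_mono)
  qed
  ultimately show ?thesis
    using sum_power_from_2_le[OF b1, of s] y unfolding b1_def y_def B2_def F_def by linarith
qed

lemma biclique_partitionable_mono: "biclique_partitionable F r \<Longrightarrow> r \<le> r' \<Longrightarrow> biclique_partitionable F r'"
proof -
  assume a: "biclique_partitionable F r" and rr: "r \<le> r'"
  then obtain bs where "length bs \<le> r"
    "\<forall>i<length bs. nonstar_biclique (fst (bs ! i)) (snd (bs ! i))"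
    "\<forall>i<length bs. \<forall>j<length bs. i \<noteq> j \<longrightarrow>
        biclique_edges (fst (bs ! i)) (snd (bs ! i)) \<inter> biclique_edges (fst (bs ! j)) (snd (bs ! j)) = {}"
    "(\<Union>i<length bs. biclique_edges (fst (bs ! i)) (snd (bs ! i))) = F"
    unfolding biclique_partitionable_def by blast
  thus ?thesis unfolding biclique_partitionable_def using rr by (intro exI[of _ bs]) auto
qed

lemma biclique_partitionable_0: "biclique_partitionable F 0 \<Longrightarrow> F = {}"
  unfolding biclique_partitionable_def by auto

definition target_properties :: "nat \<Rightarrow> nat set set \<Rightarrow> int \<Rightarrow> bool" where
  "target_properties n E k \<longleftrightarrow> (\<exists>S. independent_set n E S \<and> int (card S) = k - 1) \<and>
        (\<nexists>S. special_subgraph n E S k \<and> induced_edges E S \<noteq> {}) \<and>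
        (\<nexists>S. special_subgraph n E S (k + 1))"

lemma not_target_properties:
  assumes E: "E \<subseteq> all_edges n" and k: "k \<ge> 1" and ng: "\<not> target_properties n E (int k)"
  shows "(\<forall>S\<in>subsets_of_card n (k-1). E \<inter> potential_edges n S \<noteq> {}) \<or> excess_biclique_subgraph n E k"
proof (rule ccontr)
  assume "\<not> ((\<forall>S\<in>subsets_of_card n (k-1). E \<inter> potential_edges n S \<noteq> {}) \<or> excess_biclique_subgraph n E k)"
  then obtain S0 where S0: "S0 \<in> subsets_of_card n (k-1)" "E \<inter> potential_edges n S0 = {}" and nb: "\<not> excess_biclique_subgraph n E k" by auto
  have i1: "\<exists>S. independent_set n E S \<and> int (card S) = int k - 1"
    using S0 k induced_edges_eq_Int[OF E, of S0] unfolding independent_set_def subsets_of_card_def by (intro exI[of _ S0]) auto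
  have i2: "\<nexists>S. special_subgraph n E S (int k) \<and> induced_edges E S \<noteq> {}"
  proof
    assume "\<exists>S. special_subgraph n E S (int k) \<and> induced_edges E S \<noteq> {}"
    then obtain S r where S: "S \<subseteq> {..<n}" "int (card S) = int k + int r"
      "biclique_partitionable (induced_edges E S) r" "induced_edges E S \<noteq> {}"
      unfolding special_subgraph_def by auto
    have r1: "r \<ge> 1" using S(3,4) biclique_partitionable_0 by (cases r) auto
    have "card S = k + r" using S(2) by linarith
    hence "card S \<ge> k + 1" "card S - k = r" using r1 by auto
    thus False using nb S unfolding excess_biclique_subgraph_def by auto
  qed
  have i3: "\<nexists>S. special_subgraph n E S (int k + 1)"
  proof
    assume "\<exists>S. special_subgraph n E S (int k + 1)"
    then obtain S r where S: "S \<subseteq> {..<n}" "int (card S) = int k + 1 + int r"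
      "biclique_partitionable (induced_edges E S) r"
      unfolding special_subgraph_def by auto
    have "card S = k + 1 + r" using S(2) by linarith
    hence "card S \<ge> k + 1" "r \<le> card S - k" by auto
    thus False using nb S biclique_partitionable_mono[OF S(3)] unfolding excess_biclique_subgraph_def by blast
  qed
  show False using ng i1 i2 i3 unfolding target_properties_def by blast
qed

lemma indep_expectation_le:
  fixes p :: real assumes p: "0 < p" "p < 1" and m: "m \<ge> 1"
  shows "indep_expectation n p m \<le> (real n * exp (- p * (real m - 1) / 2)) ^ m"
proof -
  have c: "real (n choose m) \<le> real n ^ m"
  proof (cases "m \<le> n")
    case True thus ?thesis using binomial_le_pow[OF True] by (simp only: of_nat_le_iff of_nat_power[symmetric])
  next
    case False thus ?thesis by (simp add: binomial_eq_0)
  qed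
  have z: "(1 - p) ^ (m choose 2) \<le> exp (- p * (real m - 1) / 2) ^ m"
  proof -
    have "(1 - p) ^ (m choose 2) \<le> exp (-p) ^ (m choose 2)"
      using p exp_ge_add_one_self[of "-p"] by (intro power_mono) auto
    also have "\<dots> = exp (- p * (real m - 1) / 2) ^ m"
      by (simp add: exp_of_nat_mult[symmetric] real_choose_two field_simps)
    finally show ?thesis .
  qed
  have "indep_expectation n p m \<le> real n ^ m * exp (- p * (real m - 1) / 2) ^ m"
    unfolding indep_expectation_def using c z p by (intro mult_mono) auto
  thus ?thesis by (simp add: power_mult_distrib)
qed

lemma indep_expectation_step_le:
  fixes p :: real
  assumes p: "0 < p" "p \<le> 1/2" and k: "k \<ge> 1" and kn: "k + 1 \<le> n" and F1: "indep_expectation n p (k+1) \<le> 1"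
  shows "indep_expectation n p k \<le> indep_expectation n p (k-1) * (8 * real k / real n)"
proof -
  define m where "m = k - 1"
  have km: "k = Suc m" unfolding m_def using k by simp
  have n0: "real n > 0" using kn by simp
  have z: "0 < 1 - p" using p by simp
  have c: "real (n choose k) \<le> real (n choose m) * real n / real k"
  proof -
    have "real (n choose k) * real k = real (n choose m) * (real n - real m)"
      using binomial_Suc_eq[of n m] km by simp
    also have "\<dots> \<le> real (n choose m) * real n" by (intro mult_left_mono) auto
    finally show ?thesis using k by (simp add: field_simps)
  qed
  have ch: "k choose 2 = (m choose 2) + m"
    using binomial_Suc_Suc[of m 1] km by (simp add: numeral_2_eq_2)
  have D: "(1 - p) ^ k \<le> ((real k + 1) / real n)\<^sup>2"
    using pow_le_from_indep_expectation[of p k n] p kn F1 by simp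
  have zm: "(1 - p) ^ m \<le> 2 * ((real k + 1) / real n)\<^sup>2"
  proof -
    have "(1 - p) ^ m * (1 - p) = (1 - p) ^ k" using km by simp
    hence "(1 - p) ^ m = (1 - p) ^ k / (1 - p)" using z by (simp add: field_simps)
    also have "\<dots> \<le> ((real k + 1) / real n)\<^sup>2 / (1 - p)" using D z by (intro divide_right_mono) auto
    also have "\<dots> \<le> ((real k + 1) / real n)\<^sup>2 / (1/2)" using p by (intro divide_left_mono) auto
    finally show ?thesis by simp
  qed
  have kk: "2 * ((real k + 1) / real n)\<^sup>2 * (real n / real k) \<le> 8 * real k / real n"
  proof -
    have k1: "real k \<ge> 1" using k by simp
    have kk1: "real k \<le> real k * real k" using k1 mult_right_mono[of 1 "real k" "real k"] by simp
    have "(real k + 1)\<^sup>2 = real k * real k + 2 * real k + 1" by (simp add: power2_eq_square algebra_simps)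
    also have "\<dots> \<le> 4 * (real k * real k)" using k1 kk1 by linarith
    finally have "(real k + 1)\<^sup>2 \<le> 4 * (real k)\<^sup>2" by (simp add: power2_eq_square)
    hence a: "2 * (real k + 1)\<^sup>2 / (real n * real k) \<le> 2 * (4 * (real k)\<^sup>2) / (real n * real k)"
      using n0 k1 by (intro divide_right_mono) auto
    have "2 * ((real k + 1) / real n)\<^sup>2 * (real n / real k) = 2 * (real k + 1)\<^sup>2 / (real n * real k)"
      using n0 k1 by (simp add: field_simps power2_eq_square)
    also have "\<dots> \<le> 2 * (4 * (real k)\<^sup>2) / (real n * real k)" by (rule a)
    also have "\<dots> = 8 * real k / real n" using n0 k1 by (simp add: field_simps power2_eq_square)
    finally show ?thesis .
  qed
  have "indep_expectation n p k = real (n choose k) * ((1 - p) ^ (m choose 2) * (1 - p) ^ m)"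
    unfolding indep_expectation_def ch by (simp add: power_add)
  also have "\<dots> \<le> (real (n choose m) * real n / real k) * ((1 - p) ^ (m choose 2) * (2 * ((real k + 1) / real n)\<^sup>2))"
    using c zm z by (intro mult_mono mult_left_mono) auto
  also have "\<dots> = indep_expectation n p m * (2 * ((real k + 1) / real n)\<^sup>2 * (real n / real k))"
    unfolding indep_expectation_def by (simp add: field_simps)
  also have "\<dots> \<le> indep_expectation n p m * (8 * real k / real n)"
    using kk z unfolding indep_expectation_def by (intro mult_left_mono) auto
  finally show ?thesis unfolding m_def .
qed

lemma gnp_prob_no_independent_set_below_threshold:
  fixes p K T \<eta> \<theta> :: real and n k :: nat
  assumes p: "0 < p" "p \<le> 1/2"
    and k: "1 \<le> k" and K: "real k + 1 \<le> K" "K \<le> real n / 2"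
    and F1: "indep_expectation n p (k+1) \<le> T" and T1: "T \<le> 1" and F0: "T < indep_expectation n p k"
    and G: "1 \<le> T * real n / (8 * K)"
    and \<eta>: "0 < \<eta>" "\<eta> \<le> 1" and \<theta>: "0 < \<theta>" "\<theta> < 1"
    and hb1: "K\<^sup>2 / (real n / 2) * (exp 1 * real n) powr \<eta> \<le> 1/2"
    and hB2: "2 * exp 1 * (K / real n) powr (1 - \<theta>) \<le> 1"
    and hy: "2 * (2 * exp 1 * (K / real n) powr (1 - \<theta>)) powr \<eta> \<le> 1/2"
    and hB3: "4 * K\<^sup>2 * (K / real n) powr \<theta> \<le> 1/2"
  shows "gnp_prob n p (\<lambda>E. \<forall>S\<in>subsets_of_card n (k-1). E \<inter> potential_edges n S \<noteq> {}) \<le>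
     2 * (K\<^sup>2 / (real n / 2) * (exp 1 * real n) powr \<eta>)\<^sup>2
     + 4 * (2 * exp 1 * (K / real n) powr (1 - \<theta>)) powr \<eta> + 2 / (T * real n / (8 * K))"
proof -
  define G' where "G' = T * real n / (8 * K)"
  have n0: "real n > 0" using K by simp
  have kn: "k + 1 \<le> n" using K by simp
  have G'0: "G' > 0" using G unfolding G'_def by simp
  have "gnp_prob n p (\<lambda>E. \<forall>S\<in>subsets_of_card n (k-1). E \<inter> potential_edges n S \<noteq> {}) \<le>
      (\<Sum>i\<in>{2..k-1}. overlap_term n p (k-1) i)"
    using gnp_prob_no_independent_set_le[of p "k-1" n] p kn by simp
  also have "\<dots> \<le> 2 * (K\<^sup>2 / (real n / 2) * (exp 1 * real n) powr \<eta>)\<^sup>2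
     + 4 * (2 * exp 1 * (K / real n) powr (1 - \<theta>)) powr \<eta> + 2 / G'"
  proof (cases "k \<ge> 3")
    case False
    hence "{2..k-1} = {}" by auto
    thus ?thesis using G'0 by simp
  next
    case True
    have "T < indep_expectation n p (k-1) * (8 * real k / real n)"
      using F0 indep_expectation_step_le[OF p k kn] F1 T1 by simp
    hence "T * real n / (8 * real k) < indep_expectation n p (k-1)" using n0 k by (simp add: field_simps)
    moreover have "T * real n / (8 * K) \<le> T * real n / (8 * real k)"
      using G'0 n0 K k unfolding G'_def by (intro divide_left_mono) (auto simp: zero_less_divide_iff)
    ultimately have Fs: "G' \<le> indep_expectation n p (k-1)" unfolding G'_def by simp
    hence Fs1: "1 \<le> indep_expectation n p (k-1)" using G unfolding G'_def by linarith
    have "2 / indep_expectation n p (k-1) \<le> 2 / G'"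
      using G'0 Fs by (intro divide_left_mono) auto
    moreover have "(\<Sum>i\<in>{2..k-1}. overlap_term n p (k-1) i)
        \<le> 2 * (K\<^sup>2 / (real n / 2) * (exp 1 * real n) powr \<eta>)\<^sup>2
          + 4 * (2 * exp 1 * (K / real n) powr (1 - \<theta>)) powr \<eta> + 2 / indep_expectation n p (k-1)"
      by (rule overlap_sum_le[OF p _ _ _ _ _ \<eta> \<theta> hb1 hB2 hy hB3])
         (use True F1 T1 Fs1 K in auto)
    ultimately show ?thesis by linarith
  qed
  finally show ?thesis unfolding G'_def .
qed

lemma gnp_prob_excess_biclique_below_threshold:
  fixes p K T :: real and n k :: nat
  assumes p: "0 < p" "p \<le> 1/2" and K: "real k + 1 \<le> K" and kn: "k + 1 \<le> n"
    and F1: "indep_expectation n p (k+1) \<le> T" and T1: "T \<le> 1"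
    and v1: "4 * (2 * p) * sqrt (2 * p) \<le> p"
    and v2: "4 * K * (2 * p) * sqrt (2 * p) \<le> 1"
    and v3: "exp 1 * K / (real n * p\<^sup>2) \<le> 1/4"
  shows "gnp_prob n p (\<lambda>E. excess_biclique_subgraph n E k) \<le> 4 * exp 1 * T / p\<^sup>2"
proof -
  define q where "q = p / (1 - p)"
  define v where "v = sqrt q"
  have n0: "real n > 0" using kn by simp
  have q: "p \<le> q" "q \<le> 2 * p" "q \<le> 1" "q > 0" unfolding q_def using p by (auto simp: field_simps)
  have v0: "v > 0" and v_le_1: "v \<le> 1" using q unfolding v_def by auto
  have v_cube: "v ^ 3 \<le> 2 * p * sqrt (2 * p)"
  proof -
    have "v ^ 3 = q * sqrt q" unfolding v_def using q by (simp add: power3_eq_cube)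
    also have "\<dots> \<le> 2 * p * sqrt (2 * p)" using q by (intro mult_mono) auto
    finally show ?thesis .
  qed
  have v_pow4: "p\<^sup>2 \<le> v ^ 4"
  proof -
    have "v ^ 4 = (v\<^sup>2)\<^sup>2" by simp
    also have "v\<^sup>2 = q" unfolding v_def using q by simp
    finally have "v ^ 4 = q\<^sup>2" .
    thus ?thesis using q by (simp add: power_mono)
  qed
  have F1': "indep_expectation n p (k+1) \<le> 1" using F1 T1 by simp
  have "gnp_prob n p (\<lambda>E. excess_biclique_subgraph n E k) \<le>
      (\<Sum>m\<in>{k+1..n}. indep_expectation n p m * (real (m - k) + 1) * ((1 + v^3) ^ (2 * m) / v ^ 4) ^ (m - k))"
    by (rule gnp_prob_excess_biclique_le) (use p v_le_1 in \<open>auto simp: v_def q_def\<close>)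
  also have "\<dots> \<le> 4 * exp 1 * indep_expectation n p (k+1) / v^4"
  proof (rule excess_sum_le[OF p v0 kn F1'])
    show "4 * v ^ 3 \<le> p" using v_cube v1 by simp
    have "4 * real k * v ^ 3 \<le> 4 * K * (2 * p * sqrt (2 * p))"
      using K v_cube v0 by (intro mult_mono) auto
    thus "4 * real k * v ^ 3 \<le> 1" using v2 by (simp add: mult.assoc)
    have "exp 1 * (real k + 1) / (real n * v ^ 4) \<le> exp 1 * K / (real n * p\<^sup>2)"
      using K v_pow4 n0 p by (intro frac_le mult_left_mono) auto
    thus "exp 1 * (real k + 1) / (real n * v ^ 4) \<le> 1 / 4" using v3 by linarith
  qed
  also have "\<dots> \<le> 4 * exp 1 * T / p\<^sup>2"
  proof -
    have "0 \<le> indep_expectation n p (k+1)" unfolding indep_expectation_def using p by simp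
    thus ?thesis using F1 v_pow4 p by (intro frac_le) auto
  qed
  finally show ?thesis .
qed

definition failure_bound :: "nat \<Rightarrow> real \<Rightarrow> real \<Rightarrow> real \<Rightarrow> real \<Rightarrow> real \<Rightarrow> real" where
  "failure_bound n p K T \<eta> \<theta> =
     2 * (K\<^sup>2 / (real n / 2) * (exp 1 * real n) powr \<eta>)\<^sup>2
     + 4 * (2 * exp 1 * (K / real n) powr (1 - \<theta>)) powr \<eta>
     + 2 / (T * real n / (8 * K)) + 4 * exp 1 * T / p\<^sup>2"

lemma gnp_prob_target_properties_ge:
  fixes p K T \<eta> \<theta> :: real and n k :: nat
  assumes p: "0 < p" "p \<le> 1/2"
    and k: "1 \<le> k" and K: "real k + 1 \<le> K" "K \<le> real n / 2"
    and F1: "indep_expectation n p (k+1) \<le> T" and T1: "T \<le> 1" and F0: "T < indep_expectation n p k"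
    and G: "1 \<le> T * real n / (8 * K)"
    and \<eta>: "0 < \<eta>" "\<eta> \<le> 1" and \<theta>: "0 < \<theta>" "\<theta> < 1"
    and hb1: "K\<^sup>2 / (real n / 2) * (exp 1 * real n) powr \<eta> \<le> 1/2"
    and hB2: "2 * exp 1 * (K / real n) powr (1 - \<theta>) \<le> 1"
    and hy: "2 * (2 * exp 1 * (K / real n) powr (1 - \<theta>)) powr \<eta> \<le> 1/2"
    and hB3: "4 * K\<^sup>2 * (K / real n) powr \<theta> \<le> 1/2"
    and v1: "4 * (2 * p) * sqrt (2 * p) \<le> p"
    and v2: "4 * K * (2 * p) * sqrt (2 * p) \<le> 1"
    and v3: "exp 1 * K / (real n * p\<^sup>2) \<le> 1/4"
  shows "1 - failure_bound n p K T \<eta> \<theta> \<le> gnp_prob n p (\<lambda>E. target_properties n E (int k))"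
proof -
  have kn: "k + 1 \<le> n" using K by simp
  have "gnp_prob n p (\<lambda>E. \<not> target_properties n E (int k)) \<le>
        gnp_prob n p (\<lambda>E. (\<forall>S\<in>subsets_of_card n (k-1). E \<inter> potential_edges n S \<noteq> {})
                           \<or> excess_biclique_subgraph n E k)"
    using p not_target_properties[OF _ k] by (intro gnp_prob_mono) auto
  also have "\<dots> \<le> gnp_prob n p (\<lambda>E. \<forall>S\<in>subsets_of_card n (k-1). E \<inter> potential_edges n S \<noteq> {})
                 + gnp_prob n p (\<lambda>E. excess_biclique_subgraph n E k)"
    using p by (intro gnp_prob_disj) auto
  also have "\<dots> \<le> failure_bound n p K T \<eta> \<theta>"
    unfolding failure_bound_def
    using gnp_prob_no_independent_set_below_threshold[OF p k K F1 T1 F0 G \<eta> \<theta> hb1 hB2 hy hB3]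
      gnp_prob_excess_biclique_below_threshold[OF p _ kn F1 T1 v1 v2 v3] K
    by linarith
  finally show ?thesis using gnp_prob_compl[of n p "\<lambda>E. \<not> target_properties n E (int k)"] by simp
qed

definition indep_threshold :: "nat \<Rightarrow> real \<Rightarrow> real \<Rightarrow> nat" where
  "indep_threshold n p T = (LEAST s. indep_expectation n p (s + 1) \<le> T)"

lemma indep_threshold:
  fixes p x T :: real
  assumes n: "2 \<le> n" and p: "0 < p" "p \<le> 1/2" and x: "0 \<le> x"
    and T: "real n * exp (- (p * x) / 2) \<le> T" "T \<le> 1"
  defines "k \<equiv> indep_threshold n p T"
  shows "1 \<le> k" "real k \<le> x + 1" "indep_expectation n p (k + 1) \<le> T" "T < indep_expectation n p k"
proof -
  define s where "s = nat \<lceil>x\<rceil>"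
  have s: "x \<le> real s" "real s \<le> x + 1" unfolding s_def using x by linarith+
  have Ps: "indep_expectation n p (s + 1) \<le> T"
  proof -
    define y where "y = real n * exp (- p * (real (s + 1) - 1) / 2)"
    have "indep_expectation n p (s + 1) \<le> y ^ (s + 1)"
      unfolding y_def using indep_expectation_le[of p "s + 1" n] p by simp
    moreover have "y \<le> T"
    proof -
      have "y \<le> real n * exp (- (p * x) / 2)" unfolding y_def using s p by (intro mult_left_mono) auto
      thus ?thesis using T by linarith
    qed
    moreover have "y ^ (s + 1) \<le> y" using \<open>y \<le> T\<close> T by (simp add: y_def power_le_one mult_left_le)
    ultimately show ?thesis by linarith
  qed
  show "indep_expectation n p (k + 1) \<le> T" unfolding k_def indep_threshold_def by (rule LeastI[of "\<lambda>s. indep_expectation n p (s + 1) \<le> T", OF Ps])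
  have "k \<le> s" unfolding k_def indep_threshold_def by (rule Least_le[of "\<lambda>s. indep_expectation n p (s + 1) \<le> T", OF Ps])
  thus "real k \<le> x + 1" using s by linarith
  show k1: "1 \<le> k"
  proof (rule ccontr)
    assume "\<not> 1 \<le> k"
    hence "k = 0" by simp
    hence "indep_expectation n p 1 \<le> T" using \<open>indep_expectation n p (k + 1) \<le> T\<close> by simp
    moreover have "indep_expectation n p 1 = real n" unfolding indep_expectation_def by (simp add: numeral_2_eq_2)
    ultimately show False using n T by simp
  qed
  have "\<not> indep_expectation n p ((k - 1) + 1) \<le> T"
    unfolding k_def indep_threshold_def by (rule not_less_Least) (use k1 in \<open>simp add: k_def indep_threshold_def\<close>)
  thus "T < indep_expectation n p k" using k1 by simp
qed

locale sparse_exponent =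
  fixes \<gamma> :: real
  assumes gamma_gt: "-1/3 < \<gamma>" and gamma_lt: "\<gamma> < 0"
begin

text \<open>The threshold k n is at most n^\<beta> + 1 \<le> K n, the expected number of independent
(k n + 1)-sets is at most T n, and \<eta>, \<theta> separate the three ranges of the overlap sum.\<close>

definition \<beta> :: real where "\<beta> = - \<gamma> - \<gamma> * (1 + 3 * \<gamma>) / 4"
definition \<theta> :: real where "\<theta> = (1 + \<beta>) / (2 * (1 - \<beta>))"
definition \<eta> :: real where "\<eta> = (1 - 2 * \<beta>) / 2"
definition \<kappa> :: real where "\<kappa> = (1 - 2 * \<gamma> - \<beta>) / 2"

definition p :: "nat \<Rightarrow> real" where "p n = real n powr \<gamma>"
definition K :: "nat \<Rightarrow> real" where "K n = 3 * real n powr \<beta>"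
definition T :: "nat \<Rightarrow> real" where "T n = real n powr (- \<kappa>)"
definition k :: "nat \<Rightarrow> nat" where "k n = indep_threshold n (p n) (T n)"

lemma exponent_facts:
  "0 < \<beta> + \<gamma>" "0 < \<beta>" "\<beta> < 1" "0 < \<theta>" "\<theta> < 1" "0 < \<eta>" "\<eta> \<le> 1" "2 * \<beta> + \<eta> < 1"
  "0 < \<kappa>" "0 < \<kappa> + 2 * \<gamma>" "0 < 1 - \<kappa> - \<beta>" "\<beta> + 3/2 * \<gamma> < 0" "\<beta> - 1 - 2 * \<gamma> < 0"
  "(\<beta> - 1) * (1 - \<theta>) < 0" "2 * \<beta> + (\<beta> - 1) * \<theta> < 0"
proof -
  have g: "0 < - \<gamma>" "- \<gamma> < 1/3" using gamma_gt gamma_lt by auto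
  have "0 < - \<gamma> * (1 + 3 * \<gamma>)" using g by (intro mult_pos_pos) auto
  hence b_gt: "- \<gamma> < \<beta>" unfolding \<beta>_def by simp
  have b_lt: "\<beta> < 1/3"
  proof -
    have "0 < (1 + 3 * \<gamma>) * (4 + 3 * \<gamma>)" using g by (intro mult_pos_pos) auto
    thus ?thesis unfolding \<beta>_def by (simp add: field_simps)
  qed
  have b_lt': "\<beta> < - 3/2 * \<gamma>"
  proof -
    have "0 < - \<gamma> * (1 - 3 * \<gamma>)" using g by (intro mult_pos_pos) auto
    thus ?thesis unfolding \<beta>_def by (simp add: field_simps)
  qed
  have th: "(\<beta> - 1) * \<theta> = - (1 + \<beta>) / 2" unfolding \<theta>_def using b_lt by (simp add: field_simps)
  show "0 < \<beta> + \<gamma>" "0 < \<beta>" "\<beta> < 1" using b_gt b_lt g by auto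
  show "0 < \<theta>" unfolding \<theta>_def using b_gt b_lt g by simp
  show th1: "\<theta> < 1" unfolding \<theta>_def using b_lt by (simp add: field_simps)
  show "0 < \<eta>" "\<eta> \<le> 1" "2 * \<beta> + \<eta> < 1" unfolding \<eta>_def using b_gt b_lt g by (auto simp: field_simps)
  show "0 < \<kappa>" "0 < \<kappa> + 2 * \<gamma>" "0 < 1 - \<kappa> - \<beta>" unfolding \<kappa>_def using b_lt g by (auto simp: field_simps)
  show "\<beta> + 3/2 * \<gamma> < 0" "\<beta> - 1 - 2 * \<gamma> < 0" using b_lt' b_lt g by auto
  show "(\<beta> - 1) * (1 - \<theta>) < 0" using b_lt th1 by (intro mult_neg_pos) auto
  show "2 * \<beta> + (\<beta> - 1) * \<theta> < 0" unfolding th using b_lt by (simp add: field_simps)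
qed

lemma failure_terms_tendsto_0:
  "(\<lambda>n. (K n)\<^sup>2 / (real n / 2) * (exp 1 * real n) powr \<eta>) \<longlonglongrightarrow> 0"
  "(\<lambda>n. 2 * exp 1 * (K n / real n) powr (1 - \<theta>)) \<longlonglongrightarrow> 0"
  "(\<lambda>n. 4 * (K n)\<^sup>2 * (K n / real n) powr \<theta>) \<longlonglongrightarrow> 0"
  "(\<lambda>n. 2 / (T n * real n / (8 * K n))) \<longlonglongrightarrow> 0"
  "(\<lambda>n. 4 * exp 1 * T n / (p n)\<^sup>2) \<longlonglongrightarrow> 0"
  using exponent_facts unfolding K_def T_def p_def by real_asymp+

lemma failure_power_tendsto_0:
  "(\<lambda>n. (2 * exp 1 * (K n / real n) powr (1 - \<theta>)) powr \<eta>) \<longlonglongrightarrow> 0"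
  using failure_terms_tendsto_0(2) exponent_facts(6) by (intro tendsto_zero_powrI) auto

lemma failure_bound_tendsto_0:
  "(\<lambda>n. failure_bound n (p n) (K n) (T n) \<eta> \<theta>) \<longlonglongrightarrow> 0"
proof -
  have "(\<lambda>n. failure_bound n (p n) (K n) (T n) \<eta> \<theta>) \<longlonglongrightarrow> 2 * 0\<^sup>2 + 4 * 0 + 0 + 0"
    unfolding failure_bound_def
    by (intro tendsto_intros failure_terms_tendsto_0 failure_power_tendsto_0)
  thus ?thesis by simp
qed

lemma eventually_regime:
  "eventually (\<lambda>n. 2 \<le> n \<and> p n \<le> 1/2 \<and> real n * exp (- (p n * real n powr \<beta>) / 2) \<le> T n
     \<and> T n \<le> 1 \<and> K n \<le> real n / 2 \<and> 1 \<le> T n * real n / (8 * K n)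
     \<and> 4 * (2 * p n) * sqrt (2 * p n) \<le> p n \<and> 4 * K n * (2 * p n) * sqrt (2 * p n) \<le> 1
     \<and> exp 1 * K n / (real n * (p n)\<^sup>2) \<le> 1/4) sequentially"
proof -
  note facts = exponent_facts gamma_lt
  have "eventually (\<lambda>n::nat. 2 \<le> n) sequentially" by (rule eventually_ge_at_top)
  moreover have "eventually (\<lambda>n. p n \<le> 1/2) sequentially"
    using facts unfolding p_def by real_asymp
  moreover have "eventually (\<lambda>n. real n * exp (- (p n * real n powr \<beta>) / 2) \<le> T n) sequentially"
    using facts unfolding p_def T_def by real_asymp
  moreover have "eventually (\<lambda>n. T n \<le> 1) sequentially"
    using facts unfolding T_def by real_asymp
  moreover have "eventually (\<lambda>n. K n \<le> real n / 2) sequentially"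
    using facts unfolding K_def by real_asymp
  moreover have "eventually (\<lambda>n. 1 \<le> T n * real n / (8 * K n)) sequentially"
    using facts unfolding T_def K_def by real_asymp
  moreover have "eventually (\<lambda>n. 4 * (2 * p n) * sqrt (2 * p n) \<le> p n) sequentially"
    using facts unfolding p_def by real_asymp
  moreover have "eventually (\<lambda>n. 4 * K n * (2 * p n) * sqrt (2 * p n) \<le> 1) sequentially"
    using facts unfolding p_def K_def by real_asymp
  moreover have "eventually (\<lambda>n. exp 1 * K n / (real n * (p n)\<^sup>2) \<le> 1/4) sequentially"
    using facts unfolding p_def K_def by real_asymp
  ultimately show ?thesis by eventually_elim blast
qed

lemma eventually_gnp_prob_target_properties_ge:
  "eventually (\<lambda>n. 1 - failure_bound n (p n) (K n) (T n) \<eta> \<theta>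
     \<le> gnp_prob n (p n) (\<lambda>E. target_properties n E (int (k n)))) sequentially"
proof -
  have small: "eventually (\<lambda>n. f n \<le> c) sequentially" if "f \<longlonglongrightarrow> 0" "0 < c" for f :: "nat \<Rightarrow> real" and c
    using order_tendstoD(2)[OF that] by (auto elim: eventually_mono)
  have hb1: "eventually (\<lambda>n. (K n)\<^sup>2 / (real n / 2) * (exp 1 * real n) powr \<eta> \<le> 1/2) sequentially"
    by (rule small[OF failure_terms_tendsto_0(1)]) simp
  have hB2: "eventually (\<lambda>n. 2 * exp 1 * (K n / real n) powr (1 - \<theta>) \<le> 1) sequentially"
    by (rule small[OF failure_terms_tendsto_0(2)]) simp
  have hB3: "eventually (\<lambda>n. 4 * (K n)\<^sup>2 * (K n / real n) powr \<theta> \<le> 1/2) sequentially"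
    by (rule small[OF failure_terms_tendsto_0(3)]) simp
  have hy: "eventually (\<lambda>n. 2 * (2 * exp 1 * (K n / real n) powr (1 - \<theta>)) powr \<eta> \<le> 1/2) sequentially"
    using small[OF tendsto_mult_right_zero[OF failure_power_tendsto_0, of 2], of "1/2"] by simp
  show ?thesis
    using eventually_regime hb1 hB2 hB3 hy
  proof eventually_elim
    case (elim n)
    have pn: "0 < p n" "p n \<le> 1/2" using elim unfolding p_def by auto
    note th = indep_threshold[of n "p n" "real n powr \<beta>" "T n", folded k_def]
    have "real (k n) + 1 \<le> K n"
    proof -
      have "1 \<le> real n powr \<beta>" using elim exponent_facts(2) by (intro ge_one_powr_ge_zero) auto
      thus ?thesis using th pn elim unfolding K_def by auto
    qed
    thus ?case
      using exponent_facts(3-7) th pn elim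
      by (intro gnp_prob_target_properties_ge) auto
  qed
qed

lemma target_properties_tendsto_1:
  "(\<lambda>n. gnp_prob n (p n) (\<lambda>E. target_properties n E (int (k n)))) \<longlonglongrightarrow> 1"
proof (rule tendsto_sandwich[OF eventually_gnp_prob_target_properties_ge])
  show "eventually (\<lambda>n. gnp_prob n (p n) (\<lambda>E. target_properties n E (int (k n))) \<le> 1) sequentially"
  proof -
    have "eventually (\<lambda>n. p n \<le> 1) sequentially" using gamma_lt unfolding p_def by real_asymp
    thus ?thesis by eventually_elim (auto intro: gnp_prob_le_1 simp: p_def)
  qed
  show "(\<lambda>n. 1 - failure_bound n (p n) (K n) (T n) \<eta> \<theta>) \<longlonglongrightarrow> 1"
    using tendsto_diff[OF tendsto_const failure_bound_tendsto_0, of 1] by simp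
qed simp

end

theorem mainTheorem8:
  fixes \<gamma> :: real
  assumes "-1/3 < \<gamma>" and "\<gamma> < 0"
  shows "\<exists>k :: nat \<Rightarrow> int.
    (\<lambda>n. gnp_prob n (real n powr \<gamma>) (\<lambda>E.
        (\<exists>S. independent_set n E S \<and> int (card S) = k n - 1) \<and>
        (\<nexists>S. special_subgraph n E S (k n) \<and> induced_edges E S \<noteq> {}) \<and>
        (\<nexists>S. special_subgraph n E S (k n + 1))))
    \<longlonglongrightarrow> 1"
proof -
  interpret sparse_exponent \<gamma> using assms by unfold_locales
  show ?thesis
    using target_properties_tendsto_1
    unfolding p_def target_properties_def by (intro exI[of _ "\<lambda>n. int (k n)"]) simp
qed

end
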